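(* Let $k$ be a positive integer and let $\mathbf a\in\mathscr S_k$ be such that $\mathcal s(\mathbf a)>0$. Assume there is a real number $\rho>1$ such that $d_l=\mathcal O(l^{\rho-1})$ for $l\ge k+1$. Then $\kappa_{\mathbf a}(s,u)=\sum_{m,n\ge1}a_{m,n}m^{-s}n^{-\bar u}$ is a positive semi-definite Dirichlet series kernel on $\mathbb H_\rho\times\mathbb H_\rho$. Moreover, for every integer $n\ge k+1$ the analytic symbol $A_{n,\mathbf a}(s)=\sum_{m\ge1}a_{m,n}m^{-s}$ is a Dirichlet polynomial, and the Dirichlet polynomials form a dense subspace of the associated reproducing kernel Hilbert space $\mathscr H_{\mathbf a}$.
   Context: Class $\mathscr S_k$: given a $k\times k$ complex matrix $\mathbf b=(b_{i,j})$, complex numbers $c_{k+1},c_{k+2},\dots$ and positive reals $d_{k+1},d_{k+2},\dots$, let $\mathbf a=(a_{m,n})_{m,n\ge1}$ be the block matrix $\begin{pmatrix}\mathbf b&\mathbf c\\\mathbf c^*&\mathbf d\end{pmatrix}$, where $\mathbf c$ is the $k\times\infty$ matrix all of whose rows equal $(c_{k+1},c_{k+2},\dots)$ and $\mathbf d=\mathrm{diag}(d_{k+1},d_{k+2},\dots)$; i.e. $a_{i,j}=b_{i,j}$ for $i,j\le k$, $a_{i,k+l}=c_{k+l}$ and $a_{k+l,i}=\overline{c_{k+l}}$ for $i\le k$, $l\ge1$, $a_{k+l,k+l}=d_{k+l}$, and $a_{k+l,k+l'}=0$ for $l\ne l'$. $\mathbf a\in\mathscr S_k$ if $\mathbf b$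 is positive semi-definite and $\sum_{l\ge1}|c_{k+l}|^2/d_{k+l}<\infty$; then $\mathcal s(\mathbf a)=\lambda_{\min}(\mathbf b)-k\sum_{l\ge1}|c_{k+l}|^2/d_{k+l}$, with $\lambda_{\min}$ the minimal eigenvalue. $\mathbb H_\rho=\{\Re s>\rho\}$. A Dirichlet series kernel on $\mathbb H_\rho$ is $\kappa_{\mathbf a}$ such that $(s,u)\mapsto\kappa_{\mathbf a}(s,\bar u)$ is regularly convergent on $\mathbb H_\rho\times\mathbb H_\rho$ (double series convergent and all row/column series convergent). $\mathscr H_{\mathbf a}$ is the reproducing kernel Hilbert space of functions on $\mathbb H_\rho$ with kernel $\kappa_{\mathbf a}$. A Dirichlet polynomial is a finite sum $\sum_{n=1}^Nc_nn^{-s}$. *)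

theory Defs
  imports "HOL-Analysis.Analysis" "HOL-Library.Landau_Symbols"
begin

text \<open>Matrices and sequences are indexed from 1; index 0 is unused.\<close>

text \<open>The block matrix a = (b c; c* d) built from the k x k matrix b,
  the sequence c (indices l \<ge> k+1) and the diagonal d (indices l \<ge> k+1).\<close>
definition block_mat ::
  "nat \<Rightarrow> (nat \<Rightarrow> nat \<Rightarrow> complex) \<Rightarrow> (nat \<Rightarrow> complex) \<Rightarrow> (nat \<Rightarrow> real) \<Rightarrow> nat \<Rightarrow> nat \<Rightarrow> complex"
  where "block_mat k b c d m n =
    (if m \<le> k \<and> n \<le> k then b m n
     else if m \<le> k then c n
     else if n \<le> k then cnj (c m)
     else if m = n then complex_of_real (d m) else 0)"

definition psd_mat :: "nat \<Rightarrow> (nat \<Rightarrow> nat \<Rightarrow> complex) \<Rightarrow> bool" where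
  "psd_mat k b \<longleftrightarrow>
     (\<forall>i\<in>{1..k}. \<forall>j\<in>{1..k}. b i j = cnj (b j i)) \<and>
     (\<forall>v :: nat \<Rightarrow> complex. let q = (\<Sum>i=1..k. \<Sum>j=1..k. cnj (v i) * b i j * v j)
                                in Im q = 0 \<and> Re q \<ge> 0)"

definition is_eigenvalue :: "nat \<Rightarrow> (nat \<Rightarrow> nat \<Rightarrow> complex) \<Rightarrow> complex \<Rightarrow> bool" where
  "is_eigenvalue k b lam \<longleftrightarrow>
     (\<exists>v :: nat \<Rightarrow> complex. (\<exists>i\<in>{1..k}. v i \<noteq> 0) \<and>
        (\<forall>i\<in>{1..k}. (\<Sum>j=1..k. b i j * v j) = lam * v i))"

text \<open>Minimal eigenvalue (eigenvalues of a Hermitian matrix are real).\<close>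
definition lambda_min :: "nat \<Rightarrow> (nat \<Rightarrow> nat \<Rightarrow> complex) \<Rightarrow> real" where
  "lambda_min k b = Inf {x :: real. is_eigenvalue k b (complex_of_real x)}"

definition in_S :: "nat \<Rightarrow> (nat \<Rightarrow> nat \<Rightarrow> complex) \<Rightarrow> (nat \<Rightarrow> complex) \<Rightarrow> (nat \<Rightarrow> real) \<Rightarrow> bool" where
  "in_S k b c d \<longleftrightarrow> psd_mat k b \<and> (\<forall>l>k. d l > 0) \<and>
     summable (\<lambda>l. (cmod (c (k + 1 + l)))\<^sup>2 / d (k + 1 + l))"

definition s_val :: "nat \<Rightarrow> (nat \<Rightarrow> nat \<Rightarrow> complex) \<Rightarrow> (nat \<Rightarrow> complex) \<Rightarrow> (nat \<Rightarrow> real) \<Rightarrow> real" where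
  "s_val k b c d = lambda_min k b - real k * (\<Sum>l. (cmod (c (k + 1 + l)))\<^sup>2 / d (k + 1 + l))"

definition half_plane :: "real \<Rightarrow> complex set" where
  "half_plane \<rho> = {s. Re s > \<rho>}"

definition double_partial :: "(nat \<Rightarrow> nat \<Rightarrow> complex) \<Rightarrow> nat \<times> nat \<Rightarrow> complex" where
  "double_partial f = (\<lambda>(M, N). \<Sum>m<M. \<Sum>n<N. f m n)"

definition regularly_convergent :: "(nat \<Rightarrow> nat \<Rightarrow> complex) \<Rightarrow> bool" where
  "regularly_convergent f \<longleftrightarrow>
     (\<exists>L. (double_partial f \<longlongrightarrow> L) (sequentially \<times>\<^sub>F sequentially)) \<and>
     (\<forall>m. summable (\<lambda>n. f m n)) \<and> (\<forall>n. summable (\<lambda>m. f m n))"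

definition double_sum :: "(nat \<Rightarrow> nat \<Rightarrow> complex) \<Rightarrow> complex" where
  "double_sum f = (THE L. (double_partial f \<longlongrightarrow> L) (sequentially \<times>\<^sub>F sequentially))"

definition dir_terms :: "(nat \<Rightarrow> nat \<Rightarrow> complex) \<Rightarrow> complex \<Rightarrow> complex \<Rightarrow> nat \<Rightarrow> nat \<Rightarrow> complex" where
  "dir_terms a s w = (\<lambda>m n. a (Suc m) (Suc n) * of_nat (Suc m) powr (- s) * of_nat (Suc n) powr (- w))"

definition kappa :: "(nat \<Rightarrow> nat \<Rightarrow> complex) \<Rightarrow> complex \<Rightarrow> complex \<Rightarrow> complex" where
  "kappa a s u = double_sum (dir_terms a s (cnj u))"

definition dirichlet_series_kernel :: "(nat \<Rightarrow> nat \<Rightarrow> complex) \<Rightarrow> real \<Rightarrow> bool" where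
  "dirichlet_series_kernel a \<rho> \<longleftrightarrow>
     (\<forall>s\<in>half_plane \<rho>. \<forall>u\<in>half_plane \<rho>. regularly_convergent (dir_terms a s u))"

definition psd_kernel :: "(complex \<Rightarrow> complex \<Rightarrow> complex) \<Rightarrow> complex set \<Rightarrow> bool" where
  "psd_kernel K X \<longleftrightarrow>
     (\<forall>N (x :: nat \<Rightarrow> complex) (c :: nat \<Rightarrow> complex). (\<forall>i<N. x i \<in> X) \<longrightarrow>
        (let q = (\<Sum>i<N. \<Sum>j<N. cnj (c i) * c j * K (x i) (x j)) in Im q = 0 \<and> Re q \<ge> 0))"

text \<open>Reproducing kernel Hilbert space of a psd kernel K on X (Aronszajn's description):
  f belongs to H_K iff there is C with |\<Sum> conj(c_i) f(x_i)|^2 \<le> C \<Sum> conj(c_i) c_j K(x_i,x_j)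
  for all finite families; the squared norm of f is the least such C.\<close>
definition rkhs_bound :: "(complex \<Rightarrow> complex \<Rightarrow> complex) \<Rightarrow> complex set \<Rightarrow> (complex \<Rightarrow> complex) \<Rightarrow> real \<Rightarrow> bool" where
  "rkhs_bound K X f C \<longleftrightarrow> C \<ge> 0 \<and>
     (\<forall>N (x :: nat \<Rightarrow> complex) (c :: nat \<Rightarrow> complex). (\<forall>i<N. x i \<in> X) \<longrightarrow>
        (cmod (\<Sum>i<N. cnj (c i) * f (x i)))\<^sup>2 \<le> C * Re (\<Sum>i<N. \<Sum>j<N. cnj (c i) * c j * K (x i) (x j)))"

definition in_rkhs :: "(complex \<Rightarrow> complex \<Rightarrow> complex) \<Rightarrow> complex set \<Rightarrow> (complex \<Rightarrow> complex) \<Rightarrow> bool" where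
  "in_rkhs K X f \<longleftrightarrow> (\<exists>C. rkhs_bound K X f C)"

definition rkhs_norm :: "(complex \<Rightarrow> complex \<Rightarrow> complex) \<Rightarrow> complex set \<Rightarrow> (complex \<Rightarrow> complex) \<Rightarrow> real" where
  "rkhs_norm K X f = sqrt (Inf {C. rkhs_bound K X f C})"

definition dirichlet_poly :: "nat \<Rightarrow> (nat \<Rightarrow> complex) \<Rightarrow> complex \<Rightarrow> complex" where
  "dirichlet_poly N c = (\<lambda>s. \<Sum>n=1..N. c n * of_nat n powr (- s))"

definition is_dirichlet_poly :: "(complex \<Rightarrow> complex) \<Rightarrow> bool" where
  "is_dirichlet_poly f \<longleftrightarrow> (\<exists>N c. f = dirichlet_poly N c)"

definition analytic_symbol :: "(nat \<Rightarrow> nat \<Rightarrow> complex) \<Rightarrow> nat \<Rightarrow> complex \<Rightarrow> complex" where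
  "analytic_symbol a n = (\<lambda>s. \<Sum>m. a (Suc m) n * of_nat (Suc m) powr (- s))"

end

theory Submission
  imports Defs
begin

text \<open>
  A family of points \<open>x\<^sub>i \<in> H\<^sub>\<rho>\<close> with weights \<open>g\<^sub>i\<close> stands for the kernel combination
  \<open>\<Sum>\<^sub>i g\<^sub>i \<kappa>(-, x\<^sub>i)\<close>, whose coefficient sequence is \<open>W n = \<Sum>\<^sub>i g\<^sub>i n powr (- cnj x\<^sub>i)\<close>;
  its Gram form \<open>\<Sum>\<^sub>i\<^sub>,\<^sub>j cnj g\<^sub>i g\<^sub>j \<kappa>(x\<^sub>i, x\<^sub>j)\<close> equals \<open>\<Sum>\<^sub>m\<^sub>,\<^sub>n a m n cnj (W m) W n\<close>. The heart of
  the proof compares this form from both sides with the weighted norm \<open>\<Sum>\<^sub>n \<omega> n |W n|\<^sup>2\<close>, where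
  \<open>\<omega> n = 1\<close> for \<open>n \<le> k\<close> and \<open>\<omega> n = d n\<close> beyond: the block \<open>b\<close> contributes at least
  \<open>lambda_min b \<Sum>\<^sub>n\<^sub>\<le>\<^sub>k |W n|\<^sup>2\<close>, the diagonal contributes \<open>\<Sum>\<^sub>n\<^sub>>\<^sub>k d n |W n|\<^sup>2\<close>, and
  Cauchy-Schwarz absorbs the coupling through \<open>c\<close> at the price \<open>k \<Sum>\<^sub>l |c l|\<^sup>2 / d l\<close>, which
  \<open>s(a) > 0\<close> makes affordable. The growth bound on \<open>d\<close> gives absolute convergence of the double
  series on \<open>H\<^sub>\<rho>\<close> and puts every \<open>W\<close> into the weighted \<open>\<ell>\<^sup>2\<close> space.

  Hence \<open>f \<in> H\<^sub>a\<close> exactly when \<open>g \<mapsto> \<Sum>\<^sub>i cnj g\<^sub>i f(x\<^sub>i)\<close> is bounded by the weighted norm of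
  \<open>W\<close>, and Dirichlet polynomials qualify by Cauchy-Schwarz. The combinations \<open>W\<close> are dense in
  weighted \<open>\<ell>\<^sup>2\<close>, because the unit vector \<open>e\<^sub>n\<close> is the limit of
  \<open>n\<^sup>\<sigma> ((m\<^sup>-\<^sup>\<sigma>)\<^sub>m - \<Sum>\<^sub>i\<^sub><\<^sub>n i\<^sup>-\<^sup>\<sigma> e\<^sub>i)\<close> as \<open>\<sigma> \<rightarrow> \<infinity>\<close>. So the functional of \<open>f\<close> extends;
  its values \<open>\<ell>\<^sub>n\<close> at the unit vectors satisfy Bessel's inequality
  \<open>\<Sum>\<^sub>n |\<ell>\<^sub>n|\<^sup>2 / \<omega> n < \<infinity>\<close>, and the Dirichlet polynomials
  \<open>\<Sum>\<^sub>n\<^sub>\<le>\<^sub>M \<ell>\<^sub>n n\<^sup>-\<^sup>s\<close> converge to \<open>f\<close> in \<open>H\<^sub>a\<close>.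
\<close>

section \<open>Hermitian forms and the minimal eigenvalue\<close>

definition hermitian_mat :: "nat \<Rightarrow> (nat \<Rightarrow> nat \<Rightarrow> complex) \<Rightarrow> bool" where
  "hermitian_mat k M \<longleftrightarrow> (\<forall>i\<in>{1..k}. \<forall>j\<in>{1..k}. M i j = cnj (M j i))"

definition sesq_form ::
  "nat \<Rightarrow> (nat \<Rightarrow> nat \<Rightarrow> complex) \<Rightarrow> (nat \<Rightarrow> complex) \<Rightarrow> (nat \<Rightarrow> complex) \<Rightarrow> complex" where
  "sesq_form k M x y = (\<Sum>i=1..k. \<Sum>j=1..k. cnj (x i) * M i j * y j)"

definition vec_norm2 :: "nat \<Rightarrow> (nat \<Rightarrow> complex) \<Rightarrow> real" where
  "vec_norm2 k v = (\<Sum>i=1..k. (cmod (v i))\<^sup>2)"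

lemma psd_mat_hermitian: "psd_mat k M \<Longrightarrow> hermitian_mat k M"
  unfolding psd_mat_def hermitian_mat_def by blast

lemma psd_mat_sesq_form:
  "psd_mat k M \<Longrightarrow> Im (sesq_form k M v v) = 0 \<and> Re (sesq_form k M v v) \<ge> 0"
  unfolding psd_mat_def sesq_form_def Let_def by blast

lemma vec_norm2_nonneg: "vec_norm2 k v \<ge> 0"
  unfolding vec_norm2_def by (simp add: sum_nonneg)

lemma vec_norm2_eq_0D: "vec_norm2 k v = 0 \<Longrightarrow> i \<in> {1..k} \<Longrightarrow> v i = 0"
  unfolding vec_norm2_def by (subst (asm) sum_nonneg_eq_0_iff) auto

lemma vec_norm2_scale: "vec_norm2 k (\<lambda>i. c * v i) = (cmod c)\<^sup>2 * vec_norm2 k v"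
  unfolding vec_norm2_def sum_distrib_left by (simp add: norm_mult power_mult_distrib)

lemma cnj_mult_self: "cnj z * z = (complex_of_real (cmod z))\<^sup>2"
  by (metis complex_norm_square mult.commute of_real_power)

lemma sesq_form_scale:
  "sesq_form k M (\<lambda>i. c * x i) (\<lambda>i. c * x i) = (complex_of_real (cmod c))\<^sup>2 * sesq_form k M x x"
proof -
  have scale: "\<And>i j. cnj (c * x i) * M i j * (c * x j) = (cnj c * c) * (cnj (x i) * M i j * x j)"
    by (simp add: mult_ac)
  show ?thesis unfolding sesq_form_def scale sum_distrib_left cnj_mult_self ..
qed

lemma sesq_form_shift_diagonal:
  "sesq_form k (\<lambda>i j. M i j - (if i = j then of_real \<mu> else 0)) x x =
   sesq_form k M x x - of_real (\<mu> * vec_norm2 k x)"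
proof -
  have "sesq_form k (\<lambda>i j. M i j - (if i = j then of_real \<mu> else 0)) x x =
        sesq_form k M x x - (\<Sum>i=1..k. \<Sum>j=1..k. cnj (x i) * (if i = j then of_real \<mu> else 0) * x j)"
    unfolding sesq_form_def sum_subtractf[symmetric] by (intro sum.cong refl) (simp add: algebra_simps)
  also have "(\<Sum>i=1..k. \<Sum>j=1..k. cnj (x i) * (if i = j then of_real \<mu> else 0) * x j) =
             (\<Sum>i=1..k. of_real \<mu> * (cnj (x i) * x i))"
  proof (intro sum.cong refl)
    fix i assume i: "i \<in> {1..k}"
    have "(\<Sum>j=1..k. cnj (x i) * (if i = j then of_real \<mu> else 0) * x j) =
          (\<Sum>j=1..k. if i = j then cnj (x i) * of_real \<mu> * x j else 0)"
      by (intro sum.cong) auto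
    also have "\<dots> = cnj (x i) * of_real \<mu> * x i" using i by simp
    finally show "(\<Sum>j=1..k. cnj (x i) * (if i = j then of_real \<mu> else 0) * x j) =
        of_real \<mu> * (cnj (x i) * x i)" by (simp add: mult_ac)
  qed
  also have "\<dots> = of_real (\<mu> * vec_norm2 k x)"
    unfolding vec_norm2_def of_real_mult of_real_sum sum_distrib_left cnj_mult_self by simp
  finally show ?thesis .
qed

lemma sesq_form_add_scaled:
  "sesq_form k M (\<lambda>i. x i + c * y i) (\<lambda>i. x i + c * y i) =
   sesq_form k M x x + c * sesq_form k M x y + cnj c * sesq_form k M y x + cnj c * c * sesq_form k M y y"
proof -
  have expand: "\<And>i j. cnj (x i + c * y i) * M i j * (x j + c * y j) =
        cnj (x i) * M i j * x j + c * (cnj (x i) * M i j * y j) +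
        cnj c * (cnj (y i) * M i j * x j) + cnj c * c * (cnj (y i) * M i j * y j)"
    by (simp add: algebra_simps)
  show ?thesis unfolding sesq_form_def expand sum.distrib sum_distrib_left ..
qed

lemma sesq_form_mat_vec_right:
  "sesq_form k M u v = (\<Sum>i=1..k. cnj (u i) * (\<Sum>j=1..k. M i j * v j))"
  unfolding sesq_form_def sum_distrib_left mult.assoc ..

lemma sesq_form_mat_vec_left:
  assumes "hermitian_mat k M"
  shows "sesq_form k M v u = (\<Sum>j=1..k. cnj (\<Sum>i=1..k. M j i * v i) * u j)"
proof -
  have "sesq_form k M v u = (\<Sum>j=1..k. \<Sum>i=1..k. cnj (v i) * M i j * u j)"
    unfolding sesq_form_def by (rule sum.swap)
  also have "\<dots> = (\<Sum>j=1..k. \<Sum>i=1..k. cnj (M j i * v i) * u j)"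
  proof (intro sum.cong refl)
    fix j i assume "j \<in> {1..k}" "i \<in> {1..k}"
    hence "M i j = cnj (M j i)" using assms unfolding hermitian_mat_def by blast
    thus "cnj (v i) * M i j * u j = cnj (M j i * v i) * u j" by simp
  qed
  finally show ?thesis by (simp add: sum_distrib_right)
qed

lemma two_mult_le_amgm:
  fixes x y t :: real
  assumes "t > 0"
  shows "2 * (x * y) \<le> x\<^sup>2 / t + t * y\<^sup>2"
proof -
  have "0 \<le> (x - t * y)\<^sup>2 / t" using assms by simp
  also have "(x - t * y)\<^sup>2 / t = x\<^sup>2 / t + t * y\<^sup>2 - 2 * (x * y)"
    using assms by (simp add: power2_diff field_simps power2_eq_square)
  finally show ?thesis by simp
qed

lemma norm_sesq_form_le:
  "cmod (sesq_form k M w w) \<le> (\<Sum>i=1..k. \<Sum>j=1..k. cmod (M i j)) * vec_norm2 k w"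
proof -
  have entry: "cmod (cnj (w i) * M i j * w j) \<le> cmod (M i j) * vec_norm2 k w"
    if "i \<in> {1..k}" "j \<in> {1..k}" for i j
  proof -
    have "2 * (cmod (w i) * cmod (w j)) \<le> (cmod (w i))\<^sup>2 + (cmod (w j))\<^sup>2"
      using two_mult_le_amgm[of 1 "cmod (w i)" "cmod (w j)"] by simp
    also have "\<dots> \<le> 2 * vec_norm2 k w"
    proof -
      have "(cmod (w i))\<^sup>2 \<le> vec_norm2 k w" "(cmod (w j))\<^sup>2 \<le> vec_norm2 k w"
        using that unfolding vec_norm2_def by (auto intro: member_le_sum)
      thus ?thesis by simp
    qed
    finally have "cmod (w i) * cmod (w j) \<le> vec_norm2 k w" by simp
    hence "cmod (M i j) * (cmod (w i) * cmod (w j)) \<le> cmod (M i j) * vec_norm2 k w"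
      by (rule mult_left_mono) simp
    thus ?thesis by (simp add: norm_mult mult_ac)
  qed
  have "cmod (sesq_form k M w w) \<le> (\<Sum>i=1..k. \<Sum>j=1..k. cmod (cnj (w i) * M i j * w j))"
    unfolding sesq_form_def by (rule order.trans[OF norm_sum sum_mono]) (rule norm_sum)
  also have "\<dots> \<le> (\<Sum>i=1..k. \<Sum>j=1..k. cmod (M i j) * vec_norm2 k w)"
    using entry by (intro sum_mono) auto
  finally show ?thesis by (simp add: sum_distrib_right)
qed

lemma linear_coeff_zero_if_quadratic_nonneg:
  fixes U R :: real
  assumes "U \<ge> 0" and nonneg: "\<And>t. 0 \<le> 2 * t * U + t\<^sup>2 * R"
  shows "U = 0"
proof -
  have "2 * U \<le> e" if "e > 0" for e
  proof -
    define t where "t = e / (2 * (\<bar>R\<bar> + 1))"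
    have t: "t > 0" "t * \<bar>R\<bar> \<le> e / 2" using that unfolding t_def by (auto simp: field_simps)
    have "0 \<le> 2 * (- t) * U + (- t)\<^sup>2 * R" by (rule nonneg)
    hence "2 * t * U \<le> t * (t * R)" by (simp add: power2_eq_square algebra_simps)
    also have "\<dots> \<le> t * (e / 2)"
    proof (intro mult_left_mono)
      have "t * R \<le> t * \<bar>R\<bar>" using t(1) by (intro mult_left_mono) auto
      thus "t * R \<le> e / 2" using t(2) by linarith
    qed (use t in auto)
    finally show ?thesis using t(1) assms(1) by (simp add: mult_le_cancel_left_pos)
  qed
  hence "2 * U \<le> 0" using field_le_epsilon[of "2 * U" 0] by simp
  thus ?thesis using assms(1) by simp
qed

text \<open>At \<open>v + t M v\<close> the form is the quadratic \<open>2 t |M v|\<^sup>2 + t\<^sup>2 (M v)\<^sup>* M (M v)\<close> in \<open>t\<close>,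
  which stays nonnegative only if \<open>M v = 0\<close>.\<close>
lemma isotropic_vector_in_kernel:
  assumes herm: "hermitian_mat k M"
    and nonneg: "\<And>x. Re (sesq_form k M x x) \<ge> 0"
    and isotropic: "Re (sesq_form k M v v) = 0"
    and i: "i \<in> {1..k}"
  shows "(\<Sum>j=1..k. M i j * v j) = 0"
proof -
  define u where "u i = (\<Sum>j=1..k. M i j * v j)" for i
  have uv: "sesq_form k M u v = vec_norm2 k u"
    unfolding sesq_form_mat_vec_right vec_norm2_def u_def[symmetric] of_real_sum
    by (intro sum.cong refl) (simp add: cnj_mult_self)
  have vu: "sesq_form k M v u = vec_norm2 k u"
    unfolding sesq_form_mat_vec_left[OF herm] vec_norm2_def u_def[symmetric] of_real_sum
    by (intro sum.cong refl) (simp add: cnj_mult_self)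
  have "0 \<le> 2 * t * vec_norm2 k u + t\<^sup>2 * Re (sesq_form k M u u)" for t :: real
    using nonneg[of "\<lambda>i. v i + of_real t * u i"] isotropic
    unfolding sesq_form_add_scaled uv vu by (simp add: power2_eq_square)
  hence "vec_norm2 k u = 0" by (intro linear_coeff_zero_if_quadratic_nonneg vec_norm2_nonneg)
  thus ?thesis using vec_norm2_eq_0D i unfolding u_def by blast
qed

lemma compact_vec_sphere:
  "compact (Pi\<^sub>E UNIV (\<lambda>i::nat. if i \<in> {1..k} then cball (0::complex) 1 else {0}) \<inter>
            {x. vec_norm2 k x = 1})"
proof (rule compact_Int_closed)
  show "compact (Pi\<^sub>E UNIV (\<lambda>i::nat. if i \<in> {1..k} then cball (0::complex) 1 else {0}))"
    unfolding compactin_euclidean_iff[symmetric] euclidean_product_topology[symmetric] compactin_PiE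
    by auto
  show "closed {x. vec_norm2 k x = 1}"
    unfolding vec_norm2_def by (intro closed_Collect_eq continuous_intros) auto
qed

lemma sesq_form_attains_min_on_sphere:
  assumes "k \<ge> 1"
  obtains l where "vec_norm2 k l = 1"
    and "\<And>x. vec_norm2 k x = 1 \<Longrightarrow> Re (sesq_form k M l l) \<le> Re (sesq_form k M x x)"
proof -
  define sphere where "sphere = Pi\<^sub>E UNIV (\<lambda>i::nat. if i \<in> {1..k} then cball (0::complex) 1 else {0}) \<inter>
                                {x. vec_norm2 k x = 1}"
  have "continuous_on sphere (\<lambda>x. Re (sesq_form k M x x))"
    unfolding sesq_form_def
    by (intro continuous_intros) (auto intro: continuous_on_subset[OF continuous_on_product_coordinates])
  moreover have "(\<lambda>i. if i = 1 then 1 else 0) \<in> sphere"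
  proof -
    have "vec_norm2 k (\<lambda>i. if i = 1 then 1 else 0) = (\<Sum>i=1..k. if i = 1 then 1 else 0)"
      unfolding vec_norm2_def by (intro sum.cong) auto
    thus ?thesis using assms by (auto simp: sphere_def PiE_iff)
  qed
  ultimately have "\<exists>l\<in>sphere. \<forall>x\<in>sphere. Re (sesq_form k M l l) \<le> Re (sesq_form k M x x)"
    using compact_vec_sphere[of k, folded sphere_def] by (intro continuous_attains_inf) auto
  then obtain l where l: "l \<in> sphere"
    and min: "\<And>x. x \<in> sphere \<Longrightarrow> Re (sesq_form k M l l) \<le> Re (sesq_form k M x x)"
    by blast
  show ?thesis
  proof (rule that)
    show "vec_norm2 k l = 1" using l by (simp add: sphere_def)
    fix x assume x: "vec_norm2 k x = 1"
    define x' where "x' i = (if i \<in> {1..k} then x i else 0)" for i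
    have same: "vec_norm2 k x' = vec_norm2 k x" "sesq_form k M x' x' = sesq_form k M x x"
      unfolding vec_norm2_def sesq_form_def x'_def by (auto intro!: sum.cong)
    have "cmod (x i) \<le> 1" if "i \<in> {1..k}" for i
    proof -
      have "(cmod (x i))\<^sup>2 \<le> 1"
        using x that unfolding vec_norm2_def by (metis finite_atLeastAtMost member_le_sum zero_le_power2)
      thus ?thesis by (simp add: power_le_one_iff abs_le_square_iff)
    qed
    hence "x' \<in> sphere" using x same by (auto simp: sphere_def x'_def)
    thus "Re (sesq_form k M l l) \<le> Re (sesq_form k M x x)" using min same by metis
  qed
qed

lemma sesq_form_ge_by_homogeneity:
  assumes "\<And>x. vec_norm2 k x = 1 \<Longrightarrow> \<mu> \<le> Re (sesq_form k M x x)"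
  shows "\<mu> * vec_norm2 k v \<le> Re (sesq_form k M v v)"
proof (cases "vec_norm2 k v = 0")
  case True
  hence "sesq_form k M v v = 0"
    unfolding sesq_form_def using vec_norm2_eq_0D[OF True] by (intro sum.neutral ballI) simp
  thus ?thesis using True by simp
next
  case False
  hence pos: "vec_norm2 k v > 0" using vec_norm2_nonneg[of k v] by simp
  define c where "c = complex_of_real (inverse (sqrt (vec_norm2 k v)))"
  have c2: "(cmod c)\<^sup>2 = inverse (vec_norm2 k v)"
    unfolding c_def using pos by (simp add: norm_inverse power_inverse)
  have "\<mu> \<le> Re (sesq_form k M (\<lambda>i. c * v i) (\<lambda>i. c * v i))"
    using pos by (intro assms) (simp add: vec_norm2_scale c2)
  thus ?thesis using pos by (simp add: sesq_form_scale c2 field_simps)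
qed

lemma eigenvalue_if_min_on_sphere:
  assumes herm: "hermitian_mat k M" and l: "vec_norm2 k l = 1"
    and min: "\<And>x. vec_norm2 k x = 1 \<Longrightarrow> Re (sesq_form k M l l) \<le> Re (sesq_form k M x x)"
  shows "is_eigenvalue k M (Re (sesq_form k M l l))"
proof -
  define \<mu> where "\<mu> = Re (sesq_form k M l l)"
  define M' where "M' i j = M i j - (if i = j then complex_of_real \<mu> else 0)" for i j
  have shift: "Re (sesq_form k M' x x) = Re (sesq_form k M x x) - \<mu> * vec_norm2 k x" for x
    unfolding M'_def by (subst sesq_form_shift_diagonal) simp
  have "hermitian_mat k M'"
    unfolding hermitian_mat_def
  proof (intro ballI)
    fix i j assume "i \<in> {1..k}" "j \<in> {1..k}"
    hence "M i j = cnj (M j i)" using herm unfolding hermitian_mat_def by blast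
    thus "M' i j = cnj (M' j i)" unfolding M'_def by simp
  qed
  moreover have "Re (sesq_form k M' x x) \<ge> 0" for x
    using sesq_form_ge_by_homogeneity[of k \<mu> M x] min unfolding shift \<mu>_def by simp
  moreover have "Re (sesq_form k M' l l) = 0" unfolding shift l \<mu>_def by simp
  ultimately have kernel: "(\<Sum>j=1..k. M' i j * l j) = 0" if "i \<in> {1..k}" for i
    using isotropic_vector_in_kernel that by metis
  have "(\<Sum>j=1..k. M i j * l j) = \<mu> * l i" if i: "i \<in> {1..k}" for i
  proof -
    have "(\<Sum>j=1..k. M' i j * l j) = (\<Sum>j=1..k. M i j * l j) - (\<Sum>j=1..k. if i = j then \<mu> * l j else 0)"
      unfolding M'_def sum_subtractf[symmetric] by (intro sum.cong refl) (simp add: algebra_simps)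
    also have "(\<Sum>j=1..k. if i = j then \<mu> * l j else 0) = \<mu> * l i" using i by simp
    finally show ?thesis using kernel[OF i] by simp
  qed
  moreover have "\<exists>i\<in>{1..k}. l i \<noteq> 0"
  proof (rule ccontr)
    assume "\<not> ?thesis"
    hence "vec_norm2 k l = 0" unfolding vec_norm2_def by simp
    thus False using l by simp
  qed
  ultimately show ?thesis unfolding is_eigenvalue_def \<mu>_def by blast
qed

lemma psd_mat_eigenvalue_nonneg:
  assumes psd: "psd_mat k M" and ev: "is_eigenvalue k M (complex_of_real x)"
  shows "x \<ge> 0"
proof -
  obtain w :: "nat \<Rightarrow> complex" where w0: "\<exists>i\<in>{1..k}. w i \<noteq> 0"
    and ew: "\<And>i. i \<in> {1..k} \<Longrightarrow> (\<Sum>j=1..k. M i j * w j) = x * w i"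
    using ev unfolding is_eigenvalue_def by blast
  have "sesq_form k M w w = (\<Sum>i=1..k. x * (cmod (w i))\<^sup>2)"
    unfolding sesq_form_mat_vec_right of_real_sum
  proof (intro sum.cong refl)
    fix i assume "i \<in> {1..k}"
    hence "cnj (w i) * (\<Sum>j=1..k. M i j * w j) = x * (cnj (w i) * w i)"
      by (simp only: ew[OF \<open>i \<in> {1..k}\<close>]) (simp add: mult_ac)
    thus "cnj (w i) * (\<Sum>j=1..k. M i j * w j) = of_real (x * (cmod (w i))\<^sup>2)"
      by (simp add: cnj_mult_self)
  qed
  hence "Re (sesq_form k M w w) = x * vec_norm2 k w" by (simp add: vec_norm2_def sum_distrib_left)
  moreover have "vec_norm2 k w > 0"
    using w0 vec_norm2_eq_0D vec_norm2_nonneg[of k w] by (metis less_eq_real_def)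
  ultimately show ?thesis using psd_mat_sesq_form[OF psd, of w] by (simp add: zero_le_mult_iff)
qed

theorem sesq_form_ge_lambda_min:
  assumes psd: "psd_mat k M" and k: "k \<ge> 1"
  shows "lambda_min k M * vec_norm2 k v \<le> Re (sesq_form k M v v)"
proof -
  obtain l where l: "vec_norm2 k l = 1"
    and min: "\<And>x. vec_norm2 k x = 1 \<Longrightarrow> Re (sesq_form k M l l) \<le> Re (sesq_form k M x x)"
    using sesq_form_attains_min_on_sphere[OF k] by blast
  have "is_eigenvalue k M (Re (sesq_form k M l l))"
    using eigenvalue_if_min_on_sphere[OF psd_mat_hermitian[OF psd] l min] .
  moreover have "bdd_below {x. is_eigenvalue k M (complex_of_real x)}"
    using psd_mat_eigenvalue_nonneg[OF psd] by (intro bdd_belowI) blast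
  ultimately have "lambda_min k M \<le> Re (sesq_form k M l l)"
    unfolding lambda_min_def by (intro cInf_lower) auto
  hence "lambda_min k M * vec_norm2 k v \<le> Re (sesq_form k M l l) * vec_norm2 k v"
    by (intro mult_right_mono vec_norm2_nonneg)
  also have "\<dots> \<le> Re (sesq_form k M v v)"
    using sesq_form_ge_by_homogeneity min by blast
  finally show ?thesis .
qed

section \<open>Double series\<close>

lemma filterlim_rectangles_finite_subsets:
  "filterlim (\<lambda>(M::nat, N::nat). {..<M} \<times> {..<N}) (finite_subsets_at_top UNIV)
     (sequentially \<times>\<^sub>F sequentially)"
proof (subst filterlim_finite_subsets_at_top, intro allI impI)
  fix X :: "(nat \<times> nat) set" assume "finite X \<and> X \<subseteq> UNIV"
  then obtain B where B: "fst ` X \<subseteq> {..<B}" "snd ` X \<subseteq> {..<B}"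
    by (metis finite_imageI finite_nat_bounded finite_Un le_sup_iff)
  have "X \<subseteq> {..<M} \<times> {..<N}" if "M \<ge> B" "N \<ge> B" for M N
    using B that by force
  thus "\<forall>\<^sub>F y in sequentially \<times>\<^sub>F sequentially.
          finite (case y of (M, N) \<Rightarrow> {..<M} \<times> {..<N}) \<and>
          X \<subseteq> (case y of (M, N) \<Rightarrow> {..<M} \<times> {..<N}) \<and>
          (case y of (M, N) \<Rightarrow> {..<M} \<times> {..<N}) \<subseteq> UNIV"
    unfolding eventually_prod_sequentially by auto
qed

lemma filterlim_diagonal_prod_sequentially:
  "filterlim (\<lambda>n::nat. (n, n)) (sequentially \<times>\<^sub>F sequentially) sequentially"
  unfolding filterlim_def le_filter_def eventually_filtermap eventually_prod_sequentially
  by (auto simp: eventually_sequentially)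

lemma double_partial_tendsto_infsum:
  assumes "(\<lambda>(m, n). f m n) summable_on UNIV"
  shows "(double_partial f \<longlongrightarrow> (\<Sum>\<^sub>\<infinity>(m, n). f m n)) (sequentially \<times>\<^sub>F sequentially)"
proof -
  have "(sum (\<lambda>(m, n). f m n) \<longlongrightarrow> (\<Sum>\<^sub>\<infinity>(m, n). f m n)) (finite_subsets_at_top UNIV)"
    using has_sum_infsum[OF assms] unfolding has_sum_def .
  from filterlim_compose[OF this filterlim_rectangles_finite_subsets]
  show ?thesis
    by (simp add: double_partial_def sum.cartesian_product case_prod_unfold)
qed

lemma double_sum_eq_infsum:
  assumes "(\<lambda>(m, n). f m n) summable_on UNIV"
  shows "double_sum f = (\<Sum>\<^sub>\<infinity>(m, n). f m n)"
proof -
  have "sequentially \<times>\<^sub>F sequentially \<noteq> (bot :: (nat \<times> nat) filter)"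
    by (simp add: prod_filter_eq_bot)
  thus ?thesis unfolding double_sum_def
    using double_partial_tendsto_infsum[OF assms] tendsto_unique by (intro the_equality) blast+
qed

lemma double_partial_diagonal_tendsto:
  assumes "(\<lambda>(m, n). f m n) summable_on UNIV"
  shows "(\<lambda>N. double_partial f (N, N)) \<longlonglongrightarrow> double_sum f"
  using filterlim_compose[OF double_partial_tendsto_infsum[OF assms]
      filterlim_diagonal_prod_sequentially]
  by (simp add: double_sum_eq_infsum[OF assms])

lemma regularly_convergent_if_summable_on:
  fixes f :: "nat \<Rightarrow> nat \<Rightarrow> complex"
  assumes sum: "(\<lambda>(m, n). f m n) summable_on UNIV"
  shows "regularly_convergent f"
proof -
  have "summable (f m)" for m
    using summable_on_SigmaD1[of f UNIV "\<lambda>_. UNIV" m] sum by (simp add: summable_on_imp_summable)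
  moreover have "summable (\<lambda>m. f m n)" for n
  proof -
    have "(\<lambda>(n, m). f m n) summable_on UNIV"
      using sum summable_on_swap[of "\<lambda>(m, n). f m n" UNIV UNIV] by (simp add: case_prod_unfold)
    thus ?thesis
      using summable_on_SigmaD1[of "\<lambda>n m. f m n" UNIV "\<lambda>_. UNIV" n] by (simp add: summable_on_imp_summable)
  qed
  ultimately show ?thesis
    unfolding regularly_convergent_def using double_partial_tendsto_infsum[OF sum] by blast
qed

lemma summable_on_product_plus_diagonal:
  fixes p q e :: "nat \<Rightarrow> real"
  assumes "\<And>n. p n \<ge> 0" "\<And>n. q n \<ge> 0" "\<And>n. e n \<ge> 0"
    and "summable p" "summable q" "summable e"
  shows "(\<lambda>(m, n). p m * q n + (if m = n then e m else 0)) summable_on UNIV"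
proof -
  have row: "((\<lambda>n. p m * q n + (if m = n then e m else 0)) has_sum (p m * suminf q + e m)) UNIV" for m
  proof (rule has_sum_add)
    show "((\<lambda>n. p m * q n) has_sum (p m * suminf q)) UNIV"
      using assms(2,5) by (intro has_sum_cmult_right sums_nonneg_imp_has_sum summable_sums) auto
    have "((\<lambda>n. if m = n then e m else 0) has_sum e m) {m}"
      using has_sum_finite[of "{m}" "\<lambda>n. if m = n then e m else 0"] by simp
    thus "((\<lambda>n. if m = n then e m else 0) has_sum e m) UNIV"
      by (rule has_sum_cong_neutral[THEN iffD1, rotated -1]) auto
  qed
  have "(\<lambda>m. p m * suminf q + e m) summable_on UNIV"
    using assms by (subst summable_on_UNIV_nonneg_real_iff)
      (auto intro!: summable_add summable_mult2 add_nonneg_nonneg mult_nonneg_nonneg suminf_nonneg)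
  hence "(\<lambda>(m, n). p m * q n + (if m = n then e m else 0)) summable_on UNIV \<times> UNIV"
    using assms(1-3) row by (intro summable_on_SigmaI) auto
  thus ?thesis by simp
qed

section \<open>Weighted square-summable sequences\<close>

lemma norm_add_squared_le: "(cmod (p + q))\<^sup>2 \<le> 2 * (cmod p)\<^sup>2 + 2 * (cmod q)\<^sup>2"
proof -
  have "(cmod (p + q))\<^sup>2 \<le> (cmod p + cmod q)\<^sup>2" by (intro power_mono norm_triangle_ineq) auto
  also have "\<dots> \<le> 2 * (cmod p)\<^sup>2 + 2 * (cmod q)\<^sup>2"
    using zero_le_power2[of "cmod p - cmod q"] unfolding power2_diff power2_sum by linarith
  finally show ?thesis .
qed

lemma weighted_Cauchy_Schwarz:
  assumes "finite F" and pos: "\<And>n. n \<in> F \<Longrightarrow> \<omega> n > 0"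
  shows "cmod (\<Sum>n\<in>F. a n * cnj (w n)) \<le>
         sqrt (\<Sum>n\<in>F. (cmod (a n))\<^sup>2 / \<omega> n) * sqrt (\<Sum>n\<in>F. \<omega> n * (cmod (w n))\<^sup>2)"
proof -
  have "cmod (\<Sum>n\<in>F. a n * cnj (w n)) \<le> (\<Sum>n\<in>F. cmod (a n) * cmod (w n))"
    by (rule order.trans[OF norm_sum]) (simp add: norm_mult)
  also have "\<dots> = (\<Sum>n\<in>F. \<bar>cmod (a n) / sqrt (\<omega> n)\<bar> * \<bar>sqrt (\<omega> n) * cmod (w n)\<bar>)"
    using pos by (intro sum.cong refl) (simp add: abs_mult less_imp_neq[symmetric])
  also have "\<dots> \<le> L2_set (\<lambda>n. cmod (a n) / sqrt (\<omega> n)) F * L2_set (\<lambda>n. sqrt (\<omega> n) * cmod (w n)) F"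
    by (rule L2_set_mult_ineq)
  also have "\<dots> = sqrt (\<Sum>n\<in>F. (cmod (a n))\<^sup>2 / \<omega> n) * sqrt (\<Sum>n\<in>F. \<omega> n * (cmod (w n))\<^sup>2)"
    unfolding L2_set_def using pos
    by (intro arg_cong2[where f = times] arg_cong[where f = sqrt] sum.cong refl)
      (simp_all add: power_divide power_mult_distrib less_imp_le)
  finally show ?thesis .
qed

lemma Cauchy_if_dist_le_inverse_Suc:
  fixes Y :: "nat \<Rightarrow> 'a::metric_space"
  assumes "\<And>m n. dist (Y m) (Y n) \<le> K * (inverse (Suc m) + inverse (Suc n))"
  shows "Cauchy Y"
proof (rule metric_CauchyI)
  fix e :: real assume "e > 0"
  have "(\<lambda>j. 2 * K * inverse (real (Suc j))) \<longlonglongrightarrow> 2 * K * 0"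
    by (intro tendsto_mult_left LIMSEQ_inverse_real_of_nat)
  hence "\<forall>\<^sub>F j in sequentially. 2 * K * inverse (real (Suc j)) < e"
    using \<open>e > 0\<close> by (intro order_tendstoD) auto
  then obtain M where M: "2 * K * inverse (real (Suc M)) < e"
    by (auto simp: eventually_sequentially)
  have "dist (Y m) (Y n) < e" if "m \<ge> M" "n \<ge> M" for m n
  proof -
    have K: "K \<ge> 0" using assms[of 0 0] zero_le_dist[of "Y 0" "Y 0"] by (simp add: zero_le_mult_iff)
    have "inverse (real (Suc m)) \<le> inverse (real (Suc M))" "inverse (real (Suc n)) \<le> inverse (real (Suc M))"
      using that by (simp_all add: le_imp_inverse_le)
    hence "inverse (Suc m) + inverse (Suc n) \<le> 2 * inverse (real (Suc M))" by linarith
    hence "K * (inverse (Suc m) + inverse (Suc n)) \<le> K * (2 * inverse (real (Suc M)))"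
      using K by (rule mult_left_mono)
    thus ?thesis using assms[of m n] M by simp
  qed
  thus "\<exists>M. \<forall>m\<ge>M. \<forall>n\<ge>M. dist (Y m) (Y n) < e" by blast
qed

lemma le_square_if_le_mult_sqrt:
  fixes B K :: real
  assumes "B \<le> K * sqrt B" "B \<ge> 0" "K \<ge> 0"
  shows "B \<le> K\<^sup>2"
proof (cases "B = 0")
  case False
  hence "sqrt B * sqrt B \<le> K * sqrt B" "sqrt B > 0" using assms by simp_all
  hence "sqrt B \<le> K" by (rule mult_right_le_imp_le)
  hence "(sqrt B)\<^sup>2 \<le> K\<^sup>2" using assms by (intro power_mono) auto
  thus ?thesis using assms by simp
qed (use assms in simp)

locale wl2_space =
  fixes \<omega> :: "nat \<Rightarrow> real"
  assumes weight_nonneg: "\<omega> n \<ge> 0"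
begin

definition wl2 :: "(nat \<Rightarrow> complex) \<Rightarrow> bool" where
  "wl2 v \<longleftrightarrow> summable (\<lambda>n. \<omega> n * (cmod (v n))\<^sup>2)"

definition wnorm2 :: "(nat \<Rightarrow> complex) \<Rightarrow> real" where
  "wnorm2 v = (\<Sum>n. \<omega> n * (cmod (v n))\<^sup>2)"

definition wnorm :: "(nat \<Rightarrow> complex) \<Rightarrow> real" where
  "wnorm v = sqrt (wnorm2 v)"

lemma wl2_zero [simp]: "wl2 (\<lambda>n. 0)"
  unfolding wl2_def by simp

lemma wl2_finite_support: "(\<And>n. n > M \<Longrightarrow> v n = 0) \<Longrightarrow> wl2 v"
  unfolding wl2_def by (rule summable_finite[of "{..M}"]) auto

lemma wl2_scale: "wl2 v \<Longrightarrow> wl2 (\<lambda>n. c * v n)"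
  unfolding wl2_def using summable_mult[of "\<lambda>n. \<omega> n * (cmod (v n))\<^sup>2" "(cmod c)\<^sup>2"]
  by (simp add: norm_mult power_mult_distrib mult.left_commute)

lemma wl2_add:
  assumes "wl2 v" "wl2 w"
  shows "wl2 (\<lambda>n. v n + w n)"
  unfolding wl2_def
proof (rule summable_comparison_test'[where N = 0])
  show "summable (\<lambda>n. 2 * (\<omega> n * (cmod (v n))\<^sup>2) + 2 * (\<omega> n * (cmod (w n))\<^sup>2))"
    using assms unfolding wl2_def by (intro summable_add summable_mult)
  have "\<omega> n * (cmod (v n + w n))\<^sup>2 \<le> \<omega> n * (2 * (cmod (v n))\<^sup>2 + 2 * (cmod (w n))\<^sup>2)" for n
    using weight_nonneg by (intro mult_left_mono norm_add_squared_le)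
  thus "norm (\<omega> n * (cmod (v n + w n))\<^sup>2) \<le> 2 * (\<omega> n * (cmod (v n))\<^sup>2) + 2 * (\<omega> n * (cmod (w n))\<^sup>2)" for n
    using weight_nonneg[of n] by (simp add: algebra_simps)
qed

lemma wl2_diff: "wl2 v \<Longrightarrow> wl2 w \<Longrightarrow> wl2 (\<lambda>n. v n - w n)"
  using wl2_add[of v "\<lambda>n. (-1) * w n"] wl2_scale[of w "-1"] by simp

lemma wl2_sum: "finite F \<Longrightarrow> (\<And>j. j \<in> F \<Longrightarrow> wl2 (v j)) \<Longrightarrow> wl2 (\<lambda>n. \<Sum>j\<in>F. v j n)"
  by (induction F rule: finite_induct) (auto intro: wl2_add)

lemma wnorm2_nonneg: "wl2 v \<Longrightarrow> wnorm2 v \<ge> 0"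
  unfolding wl2_def wnorm2_def using weight_nonneg by (intro suminf_nonneg) auto

lemma sum_le_wnorm2:
  "finite F \<Longrightarrow> wl2 v \<Longrightarrow> (\<Sum>n\<in>F. \<omega> n * (cmod (v n))\<^sup>2) \<le> wnorm2 v"
  unfolding wl2_def wnorm2_def using weight_nonneg by (intro sum_le_suminf) auto

lemma sqrt_sum_le_wnorm:
  "finite F \<Longrightarrow> wl2 v \<Longrightarrow> sqrt (\<Sum>n\<in>F. \<omega> n * (cmod (v n))\<^sup>2) \<le> wnorm v"
  unfolding wnorm_def using sum_le_wnorm2 by simp

lemma wnorm2_partial_sums_tendsto:
  "wl2 v \<Longrightarrow> (\<lambda>M. \<Sum>n<M. \<omega> n * (cmod (v n))\<^sup>2) \<longlonglongrightarrow> wnorm2 v"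
  unfolding wl2_def wnorm2_def by (rule summable_LIMSEQ)

lemma wnorm_nonneg: "wl2 v \<Longrightarrow> wnorm v \<ge> 0"
  unfolding wnorm_def using wnorm2_nonneg by simp

lemma wnorm_zero [simp]: "wnorm (\<lambda>n. 0) = 0"
  unfolding wnorm_def wnorm2_def by simp

lemma wnorm_scale:
  assumes "wl2 v"
  shows "wnorm (\<lambda>n. c * v n) = cmod c * wnorm v"
proof -
  have "wnorm2 (\<lambda>n. c * v n) = (cmod c)\<^sup>2 * wnorm2 v"
    using assms unfolding wl2_def wnorm2_def
    by (subst suminf_mult[symmetric]) (auto simp: norm_mult power_mult_distrib mult_ac)
  thus ?thesis unfolding wnorm_def by (simp add: real_sqrt_mult)
qed

lemma wnorm_triangle:
  assumes "wl2 v" "wl2 w"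
  shows "wnorm (\<lambda>n. v n + w n) \<le> wnorm v + wnorm w"
proof -
  let ?L2 = "\<lambda>u M. L2_set (\<lambda>n. sqrt (\<omega> n) * cmod (u n)) {..<M}"
  have L2_eq: "?L2 u M = sqrt (\<Sum>n<M. \<omega> n * (cmod (u n))\<^sup>2)" for u M
    unfolding L2_set_def using weight_nonneg by (simp add: power_mult_distrib)
  have L2_triangle: "?L2 (\<lambda>n. v n + w n) M \<le> ?L2 v M + ?L2 w M" for M
  proof -
    have "?L2 (\<lambda>n. v n + w n) M \<le>
          L2_set (\<lambda>n. sqrt (\<omega> n) * cmod (v n) + sqrt (\<omega> n) * cmod (w n)) {..<M}"
      using weight_nonneg
      by (intro L2_set_mono) (auto simp: distrib_left[symmetric] intro!: mult_left_mono norm_triangle_ineq)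
    also have "\<dots> \<le> ?L2 v M + ?L2 w M" by (rule L2_set_triangle_ineq)
    finally show ?thesis .
  qed
  have "sqrt (\<Sum>n<M. \<omega> n * (cmod (v n + w n))\<^sup>2) \<le> wnorm v + wnorm w" for M
  proof -
    have "sqrt (\<Sum>n<M. \<omega> n * (cmod (v n + w n))\<^sup>2) \<le>
          sqrt (\<Sum>n<M. \<omega> n * (cmod (v n))\<^sup>2) + sqrt (\<Sum>n<M. \<omega> n * (cmod (w n))\<^sup>2)"
      using L2_triangle[of M] unfolding L2_eq .
    also have "\<dots> \<le> wnorm v + wnorm w" by (intro add_mono sqrt_sum_le_wnorm assms) auto
    finally show ?thesis .
  qed
  moreover have "(\<lambda>M. sqrt (\<Sum>n<M. \<omega> n * (cmod (v n + w n))\<^sup>2)) \<longlonglongrightarrow> wnorm (\<lambda>n. v n + w n)"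
    unfolding wnorm_def using wl2_add[OF assms]
    by (intro tendsto_real_sqrt wnorm2_partial_sums_tendsto)
  ultimately show ?thesis by (intro tendsto_le[OF _ tendsto_const]) auto
qed

lemma wnorm_diff_commute: "wl2 u \<Longrightarrow> wl2 v \<Longrightarrow> wnorm (\<lambda>n. u n - v n) = wnorm (\<lambda>n. v n - u n)"
  using wnorm_scale[OF wl2_diff, of u v "-1"] by simp

lemma wnorm_triangle_diff:
  assumes "wl2 u" "wl2 v" "wl2 w"
  shows "wnorm (\<lambda>n. u n - w n) \<le> wnorm (\<lambda>n. u n - v n) + wnorm (\<lambda>n. v n - w n)"
  using wnorm_triangle[OF wl2_diff[OF assms(1,2)] wl2_diff[OF assms(2,3)]] by simp


end

section \<open>Closure of kernel combinations\<close>

definition unit_vec :: "nat \<Rightarrow> nat \<Rightarrow> complex" where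
  "unit_vec n = (\<lambda>m. if m = n then 1 else 0)"

lemma sum_unit_vec: "finite A \<Longrightarrow> (\<Sum>n\<in>A. a n * unit_vec n m) = (if m \<in> A then a m else 0)"
  unfolding unit_vec_def by (simp add: if_distrib if_distribR cong: if_cong)

definition append_seq :: "nat \<Rightarrow> (nat \<Rightarrow> 'a) \<Rightarrow> (nat \<Rightarrow> 'a) \<Rightarrow> nat \<Rightarrow> 'a" where
  "append_seq N u v = (\<lambda>i. if i < N then u i else v (i - N))"

lemma sum_lessThan_append_seq:
  "(\<Sum>i<N1 + N2. h (append_seq N1 u v i)) = (\<Sum>i<N1. h (u i)) + (\<Sum>i<N2. h (v i))"
  by (induction N2) (simp_all add: append_seq_def add_ac)

text \<open>\<open>\<phi> x\<close> plays the coefficient sequence of the kernel function at \<open>x\<close>. A family of points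
  \<open>x\<^sub>0, \<dots>, x\<^sub>N\<^sub>-\<^sub>1\<close> with weights \<open>g\<close> stands for the combination \<open>\<Sum> g\<^sub>i \<phi>(x\<^sub>i)\<close>: \<open>comb\<close> is its
  coefficient sequence and \<open>pairing f\<close> its inner product with \<open>f\<close>. Sequences are indexed
  from 1, so the weight vanishes at the unused index 0.\<close>
locale feature_space = wl2_space \<omega> for \<omega> :: "nat \<Rightarrow> real" +
  fixes X :: "complex set" and \<phi> :: "complex \<Rightarrow> nat \<Rightarrow> complex"
  assumes weight_0: "\<omega> 0 = 0" and weight_pos: "n > 0 \<Longrightarrow> \<omega> n > 0"
    and wl2_feature: "x \<in> X \<Longrightarrow> wl2 (\<phi> x)"
begin

definition admissible :: "nat \<Rightarrow> (nat \<Rightarrow> complex) \<Rightarrow> bool" where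
  "admissible N x \<longleftrightarrow> (\<forall>i<N. x i \<in> X)"

definition comb :: "nat \<Rightarrow> (nat \<Rightarrow> complex) \<Rightarrow> (nat \<Rightarrow> complex) \<Rightarrow> nat \<Rightarrow> complex" where
  "comb N x g = (\<lambda>n. \<Sum>i<N. g i * \<phi> (x i) n)"

definition pairing ::
  "(complex \<Rightarrow> complex) \<Rightarrow> nat \<Rightarrow> (nat \<Rightarrow> complex) \<Rightarrow> (nat \<Rightarrow> complex) \<Rightarrow> complex" where
  "pairing f N x g = (\<Sum>i<N. cnj (g i) * f (x i))"

definition bounded_pairing :: "(complex \<Rightarrow> complex) \<Rightarrow> real \<Rightarrow> bool" where
  "bounded_pairing f K \<longleftrightarrow>
     (\<forall>N x g. admissible N x \<longrightarrow> cmod (pairing f N x g) \<le> K * wnorm (comb N x g))"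

definition approximable :: "(nat \<Rightarrow> complex) \<Rightarrow> bool" where
  "approximable v \<longleftrightarrow> wl2 v \<and>
     (\<forall>\<epsilon>>0. \<exists>N x g. admissible N x \<and> wnorm (\<lambda>n. comb N x g n - v n) < \<epsilon>)"

definition feature_poly :: "nat \<Rightarrow> (nat \<Rightarrow> complex) \<Rightarrow> complex \<Rightarrow> complex" where
  "feature_poly M c x = (\<Sum>n=1..M. c n * cnj (\<phi> x n))"

lemma wl2_comb: "admissible N x \<Longrightarrow> wl2 (comb N x g)"
  unfolding comb_def admissible_def by (intro wl2_sum wl2_scale wl2_feature) auto

lemma admissible_append:
  "admissible N1 x1 \<Longrightarrow> admissible N2 x2 \<Longrightarrow> admissible (N1 + N2) (append_seq N1 x1 x2)"
  unfolding admissible_def append_seq_def by auto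

lemma comb_append:
  "comb (N1 + N2) (append_seq N1 x1 x2) (append_seq N1 g1 g2) n = comb N1 x1 g1 n + comb N2 x2 g2 n"
proof -
  have "comb (N1 + N2) (append_seq N1 x1 x2) (append_seq N1 g1 g2) n =
        (\<Sum>i<N1 + N2. (\<lambda>(g, x). g * \<phi> x n) (append_seq N1 (\<lambda>i. (g1 i, x1 i)) (\<lambda>i. (g2 i, x2 i)) i))"
    unfolding comb_def by (intro sum.cong refl) (simp add: append_seq_def)
  thus ?thesis unfolding sum_lessThan_append_seq comb_def by simp
qed

lemma pairing_append:
  "pairing f (N1 + N2) (append_seq N1 x1 x2) (append_seq N1 g1 g2) = pairing f N1 x1 g1 + pairing f N2 x2 g2"
proof -
  have "pairing f (N1 + N2) (append_seq N1 x1 x2) (append_seq N1 g1 g2) =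
        (\<Sum>i<N1 + N2. (\<lambda>(g, x). cnj g * f x) (append_seq N1 (\<lambda>i. (g1 i, x1 i)) (\<lambda>i. (g2 i, x2 i)) i))"
    unfolding pairing_def by (intro sum.cong refl) (simp add: append_seq_def)
  thus ?thesis unfolding sum_lessThan_append_seq pairing_def by simp
qed

lemma comb_scale: "comb N x (\<lambda>i. c * g i) n = c * comb N x g n"
  unfolding comb_def sum_distrib_left by (simp add: mult_ac)

lemma pairing_scale: "pairing f N x (\<lambda>i. c * g i) = cnj c * pairing f N x g"
  unfolding pairing_def sum_distrib_left by (simp add: mult_ac)

lemma pairing_diff: "pairing (\<lambda>s. f s - p s) N x g = pairing f N x g - pairing p N x g"
  unfolding pairing_def by (simp add: right_diff_distrib sum_subtractf)

lemma comb_empty [simp]: "comb 0 x g = (\<lambda>n. 0)"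
  unfolding comb_def by simp

lemma pairing_empty [simp]: "pairing f 0 x g = 0"
  unfolding pairing_def by simp

lemma admissible_empty [simp]: "admissible 0 x"
  unfolding admissible_def by simp

lemma pairing_feature_poly:
  "pairing (feature_poly M c) N x g = (\<Sum>n=1..M. c n * cnj (comb N x g n))"
proof -
  have "pairing (feature_poly M c) N x g = (\<Sum>i<N. \<Sum>n=1..M. c n * (cnj (g i) * cnj (\<phi> (x i) n)))"
    unfolding pairing_def feature_poly_def sum_distrib_left by (intro sum.cong refl) (simp add: mult_ac)
  also have "\<dots> = (\<Sum>n=1..M. \<Sum>i<N. c n * (cnj (g i) * cnj (\<phi> (x i) n)))"
    by (rule sum.swap)
  also have "\<dots> = (\<Sum>n=1..M. c n * cnj (comb N x g n))"
    unfolding comb_def cnj_sum complex_cnj_mult sum_distrib_left ..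
  finally show ?thesis .
qed

lemma feature_poly_bounded_pairing:
  "bounded_pairing (feature_poly M c) (sqrt (\<Sum>n=1..M. (cmod (c n))\<^sup>2 / \<omega> n))"
  unfolding bounded_pairing_def pairing_feature_poly
proof (intro allI impI)
  fix N x g assume "admissible N x"
  hence tail: "sqrt (\<Sum>n=1..M. \<omega> n * (cmod (comb N x g n))\<^sup>2) \<le> wnorm (comb N x g)"
    by (intro sqrt_sum_le_wnorm wl2_comb) auto
  have "cmod (\<Sum>n=1..M. c n * cnj (comb N x g n)) \<le>
      sqrt (\<Sum>n=1..M. (cmod (c n))\<^sup>2 / \<omega> n) * sqrt (\<Sum>n=1..M. \<omega> n * (cmod (comb N x g n))\<^sup>2)"
    by (rule weighted_Cauchy_Schwarz) (auto intro: weight_pos)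
  thus "cmod (\<Sum>n=1..M. c n * cnj (comb N x g n)) \<le>
      sqrt (\<Sum>n=1..M. (cmod (c n))\<^sup>2 / \<omega> n) * wnorm (comb N x g)"
    using mult_left_mono[OF tail real_sqrt_ge_zero] by (rule order_trans)
      (use weight_nonneg in \<open>auto intro: sum_nonneg\<close>)
qed

lemma approximable_wl2: "approximable v \<Longrightarrow> wl2 v"
  unfolding approximable_def by blast

lemma approximable_comb:
  assumes "admissible N x"
  shows "approximable (comb N x g)"
  unfolding approximable_def
proof (intro conjI allI impI)
  show "wl2 (comb N x g)" using assms by (rule wl2_comb)
  fix \<epsilon> :: real assume "\<epsilon> > 0"
  thus "\<exists>N' x' g'. admissible N' x' \<and> wnorm (\<lambda>n. comb N' x' g' n - comb N x g n) < \<epsilon>"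
    using assms by (intro exI[of _ N] exI[of _ x] exI[of _ g]) simp
qed

lemma approximable_zero: "approximable (\<lambda>n. 0)"
  using approximable_comb[OF admissible_empty] by simp

lemma approximable_add:
  assumes v: "approximable v" and w: "approximable w"
  shows "approximable (\<lambda>n. v n + w n)"
  unfolding approximable_def
proof (intro conjI allI impI)
  have wl2: "wl2 v" "wl2 w" using v w by (auto dest: approximable_wl2)
  thus "wl2 (\<lambda>n. v n + w n)" by (rule wl2_add)
  fix \<epsilon> :: real assume "\<epsilon> > 0"
  then obtain N1 x1 g1 N2 x2 g2 where
    adm: "admissible N1 x1" "admissible N2 x2" and
    close: "wnorm (\<lambda>n. comb N1 x1 g1 n - v n) < \<epsilon> / 2" "wnorm (\<lambda>n. comb N2 x2 g2 n - w n) < \<epsilon> / 2"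
    using v w unfolding approximable_def by (meson half_gt_zero)
  have "wnorm (\<lambda>n. comb (N1 + N2) (append_seq N1 x1 x2) (append_seq N1 g1 g2) n - (v n + w n)) =
        wnorm (\<lambda>n. (comb N1 x1 g1 n - v n) + (comb N2 x2 g2 n - w n))"
    unfolding comb_append by (simp add: algebra_simps)
  also have "\<dots> \<le> wnorm (\<lambda>n. comb N1 x1 g1 n - v n) + wnorm (\<lambda>n. comb N2 x2 g2 n - w n)"
    using adm wl2 by (intro wnorm_triangle wl2_diff wl2_comb)
  also have "\<dots> < \<epsilon>" using close by simp
  finally show "\<exists>N x g. admissible N x \<and> wnorm (\<lambda>n. comb N x g n - (v n + w n)) < \<epsilon>"
    using admissible_append[OF adm] by blast
qed

lemma approximable_scale:
  assumes v: "approximable v"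
  shows "approximable (\<lambda>n. c * v n)"
proof (cases "c = 0")
  case True
  thus ?thesis using approximable_zero by simp
next
  case False
  show ?thesis unfolding approximable_def
  proof (intro conjI allI impI)
    show "wl2 (\<lambda>n. c * v n)" using v by (intro wl2_scale approximable_wl2)
    fix \<epsilon> :: real assume "\<epsilon> > 0"
    then obtain N x g where adm: "admissible N x" and close: "wnorm (\<lambda>n. comb N x g n - v n) < \<epsilon> / cmod c"
      using v False unfolding approximable_def by (meson divide_pos_pos zero_less_norm_iff)
    have "wnorm (\<lambda>n. comb N x (\<lambda>i. c * g i) n - c * v n) = wnorm (\<lambda>n. c * (comb N x g n - v n))"
      unfolding comb_scale by (simp add: algebra_simps)
    also have "\<dots> = cmod c * wnorm (\<lambda>n. comb N x g n - v n)"
      using adm v by (intro wnorm_scale wl2_diff wl2_comb approximable_wl2)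
    also have "\<dots> < \<epsilon>" using close False by (simp add: field_simps)
    finally show "\<exists>N x g. admissible N x \<and> wnorm (\<lambda>n. comb N x g n - c * v n) < \<epsilon>"
      using adm by blast
  qed
qed

lemma approximable_diff: "approximable v \<Longrightarrow> approximable w \<Longrightarrow> approximable (\<lambda>n. v n - w n)"
  using approximable_add[of v "\<lambda>n. (-1) * w n"] approximable_scale[of w "-1"] by simp

lemma approximable_sum:
  "finite F \<Longrightarrow> (\<And>j. j \<in> F \<Longrightarrow> approximable (v j)) \<Longrightarrow> approximable (\<lambda>n. \<Sum>j\<in>F. v j n)"
  by (induction F rule: finite_induct) (auto intro: approximable_zero approximable_add)

lemma approximable_if_approximated:
  assumes "wl2 v" and approx: "\<And>\<epsilon>. \<epsilon> > 0 \<Longrightarrow> \<exists>w. approximable w \<and> wnorm (\<lambda>n. w n - v n) < \<epsilon>"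
  shows "approximable v"
  unfolding approximable_def
proof (intro conjI allI impI)
  show "wl2 v" by fact
  fix \<epsilon> :: real assume "\<epsilon> > 0"
  then obtain w where w: "approximable w" and close_w: "wnorm (\<lambda>n. w n - v n) < \<epsilon> / 2"
    using approx[of "\<epsilon> / 2"] by auto
  obtain N x g where adm: "admissible N x" and close: "wnorm (\<lambda>n. comb N x g n - w n) < \<epsilon> / 2"
    using w \<open>\<epsilon> > 0\<close> unfolding approximable_def by (meson half_gt_zero)
  have "wnorm (\<lambda>n. comb N x g n - v n) \<le> wnorm (\<lambda>n. comb N x g n - w n) + wnorm (\<lambda>n. w n - v n)"
    by (intro wnorm_triangle_diff wl2_comb adm approximable_wl2[OF w] assms(1))
  also have "\<dots> < \<epsilon>" using close close_w by simp
  finally show "\<exists>N x g. admissible N x \<and> wnorm (\<lambda>n. comb N x g n - v n) < \<epsilon>"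
    using adm by blast
qed

lemma bounded_pairing_Lipschitz:
  assumes f: "bounded_pairing f K" and adm: "admissible N1 x1" "admissible N2 x2"
  shows "cmod (pairing f N1 x1 g1 - pairing f N2 x2 g2) \<le> K * wnorm (\<lambda>n. comb N1 x1 g1 n - comb N2 x2 g2 n)"
proof -
  let ?g = "append_seq N1 g1 (\<lambda>i. (-1) * g2 i)"
  have "cmod (pairing f (N1 + N2) (append_seq N1 x1 x2) ?g) \<le> K * wnorm (comb (N1 + N2) (append_seq N1 x1 x2) ?g)"
    using f admissible_append[OF adm] unfolding bounded_pairing_def by blast
  moreover have "pairing f (N1 + N2) (append_seq N1 x1 x2) ?g = pairing f N1 x1 g1 - pairing f N2 x2 g2"
    unfolding pairing_append pairing_scale by simp
  moreover have "comb (N1 + N2) (append_seq N1 x1 x2) ?g = (\<lambda>n. comb N1 x1 g1 n - comb N2 x2 g2 n)"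
    unfolding comb_append comb_scale by (rule ext) simp
  ultimately show ?thesis by simp
qed

text \<open>\<open>y\<close> is the value at \<open>v\<close> of the continuous extension of the functional
  \<open>comb N x g \<mapsto> pairing f N x g\<close>; the Lipschitz bound characterises it without having to
  construct the extension.\<close>
definition extension_value ::
  "(complex \<Rightarrow> complex) \<Rightarrow> real \<Rightarrow> (nat \<Rightarrow> complex) \<Rightarrow> complex \<Rightarrow> bool" where
  "extension_value f K v y \<longleftrightarrow>
     (\<forall>N x g. admissible N x \<longrightarrow> cmod (pairing f N x g - y) \<le> K * wnorm (\<lambda>n. comb N x g n - v n))"

lemma extension_value_zero: "bounded_pairing f K \<Longrightarrow> extension_value f K (\<lambda>n. 0) 0"
  unfolding extension_value_def bounded_pairing_def by simp

lemma pairing_dist_le: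
  assumes f: "bounded_pairing f K" and K: "K \<ge> 0" and v: "wl2 v"
    and adm: "admissible N1 x1" "admissible N2 x2"
  shows "cmod (pairing f N1 x1 g1 - pairing f N2 x2 g2) \<le>
           K * (wnorm (\<lambda>n. comb N1 x1 g1 n - v n) + wnorm (\<lambda>n. comb N2 x2 g2 n - v n))"
proof -
  have "wnorm (\<lambda>n. comb N1 x1 g1 n - comb N2 x2 g2 n) \<le>
        wnorm (\<lambda>n. comb N1 x1 g1 n - v n) + wnorm (\<lambda>n. v n - comb N2 x2 g2 n)"
    using adm v by (intro wnorm_triangle_diff wl2_comb)
  also have "wnorm (\<lambda>n. v n - comb N2 x2 g2 n) = wnorm (\<lambda>n. comb N2 x2 g2 n - v n)"
    using adm v by (intro wnorm_diff_commute wl2_comb)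
  finally show ?thesis
    using bounded_pairing_Lipschitz[OF f adm, of g1 g2] mult_left_mono[OF _ K] order_trans by blast
qed

lemma extension_value_exists:
  assumes f: "bounded_pairing f K" and K: "K \<ge> 0" and v: "approximable v"
  shows "\<exists>y. extension_value f K v y"
proof -
  have "\<forall>j::nat. \<exists>N x g. admissible N x \<and> wnorm (\<lambda>n. comb N x g n - v n) < inverse (Suc j)"
    using v unfolding approximable_def by simp
  then obtain N x g where adm: "\<And>j. admissible (N j) (x j)"
    and close: "\<And>j. wnorm (\<lambda>n. comb (N j) (x j) (g j) n - v n) < inverse (Suc j)"
    by metis
  define Y where "Y j = pairing f (N j) (x j) (g j)" for j
  have dist_Y: "cmod (pairing f N' x' g' - Y j) \<le> K * (wnorm (\<lambda>n. comb N' x' g' n - v n) + inverse (Suc j))"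
    if adm': "admissible N' x'" for N' x' g' j
  proof -
    have "cmod (pairing f N' x' g' - Y j) \<le>
          K * (wnorm (\<lambda>n. comb N' x' g' n - v n) + wnorm (\<lambda>n. comb (N j) (x j) (g j) n - v n))"
      unfolding Y_def using f K approximable_wl2[OF v] adm' adm by (rule pairing_dist_le)
    also have "\<dots> \<le> K * (wnorm (\<lambda>n. comb N' x' g' n - v n) + inverse (Suc j))"
      using close[of j] K by (intro mult_left_mono add_left_mono) auto
    finally show ?thesis .
  qed
  have "dist (Y m) (Y n) \<le> K * (inverse (Suc m) + inverse (Suc n))" for m n
  proof -
    have "dist (Y m) (Y n) \<le> K * (wnorm (\<lambda>i. comb (N m) (x m) (g m) i - v i) + inverse (Suc n))"
      using dist_Y[OF adm] unfolding dist_norm Y_def .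
    also have "\<dots> \<le> K * (inverse (Suc m) + inverse (Suc n))"
      using close[of m] K by (intro mult_left_mono add_right_mono) auto
    finally show ?thesis .
  qed
  hence "Cauchy Y" by (rule Cauchy_if_dist_le_inverse_Suc)
  then obtain y where "Y \<longlonglongrightarrow> y" using Cauchy_convergent_iff convergent_def by blast
  have "cmod (pairing f N' x' g' - y) \<le> K * wnorm (\<lambda>n. comb N' x' g' n - v n)"
    if adm': "admissible N' x'" for N' x' g'
  proof -
    have "(\<lambda>j. cmod (pairing f N' x' g' - Y j)) \<longlonglongrightarrow> cmod (pairing f N' x' g' - y)"
      by (intro tendsto_intros \<open>Y \<longlonglongrightarrow> y\<close>)
    moreover have "(\<lambda>j. K * (wnorm (\<lambda>n. comb N' x' g' n - v n) + inverse (Suc j))) \<longlonglongrightarrow>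
                   K * (wnorm (\<lambda>n. comb N' x' g' n - v n) + 0)"
      by (intro tendsto_intros LIMSEQ_inverse_real_of_nat)
    ultimately show ?thesis using dist_Y[OF adm'] by (intro tendsto_le[of sequentially]) auto
  qed
  thus ?thesis unfolding extension_value_def by blast
qed

lemma extension_value_add:
  assumes K: "K \<ge> 0" and v: "extension_value f K v y"
    and w: "approximable w" "extension_value f K w z" and wl2_v: "wl2 v"
  shows "extension_value f K (\<lambda>n. v n + w n) (y + z)"
  unfolding extension_value_def
proof (intro allI impI)
  fix N x g assume adm: "admissible N x"
  let ?d = "wnorm (\<lambda>n. comb N x g n - (v n + w n))"
  show "cmod (pairing f N x g - (y + z)) \<le> K * ?d"
  proof (rule field_le_epsilon)
    txt \<open>Apply the bound for \<open>v\<close> to the family minus an approximant of \<open>w\<close>, and the bound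
      for \<open>w\<close> to that approximant.\<close>
    fix e :: real assume "e > 0"
    hence "e / (2 * K + 1) > 0" using K by simp
    then obtain N2 x2 g2 where adm2: "admissible N2 x2"
      and close: "wnorm (\<lambda>n. comb N2 x2 g2 n - w n) < e / (2 * K + 1)"
      using w(1) unfolding approximable_def by blast
    let ?x = "append_seq N x x2" and ?g = "append_seq N g (\<lambda>i. (-1) * g2 i)"
    have "cmod (pairing f (N + N2) ?x ?g - y) \<le> K * wnorm (\<lambda>n. comb (N + N2) ?x ?g n - v n)"
      using v admissible_append[OF adm adm2] unfolding extension_value_def by blast
    also have "(\<lambda>n. comb (N + N2) ?x ?g n - v n) =
               (\<lambda>n. (comb N x g n - (v n + w n)) + (w n - comb N2 x2 g2 n))"
      unfolding comb_append comb_scale by (simp add: algebra_simps)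
    also have "wnorm \<dots> \<le> ?d + wnorm (\<lambda>n. w n - comb N2 x2 g2 n)"
      using adm adm2 wl2_v approximable_wl2[OF w(1)]
      by (intro wnorm_triangle wl2_diff wl2_add wl2_comb)
    also have "wnorm (\<lambda>n. w n - comb N2 x2 g2 n) = wnorm (\<lambda>n. comb N2 x2 g2 n - w n)"
      using adm2 approximable_wl2[OF w(1)] by (intro wnorm_diff_commute wl2_comb)
    finally have "cmod (pairing f N x g - pairing f N2 x2 g2 - y) \<le>
                  K * (?d + wnorm (\<lambda>n. comb N2 x2 g2 n - w n))"
      using K unfolding pairing_append pairing_scale by (simp add: mult_left_mono)
    moreover have "cmod (pairing f N2 x2 g2 - z) \<le> K * wnorm (\<lambda>n. comb N2 x2 g2 n - w n)"
      using w(2) adm2 unfolding extension_value_def by blast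
    ultimately have "cmod (pairing f N x g - (y + z)) \<le> K * ?d + 2 * K * wnorm (\<lambda>n. comb N2 x2 g2 n - w n)"
      using norm_triangle_ineq[of "pairing f N x g - pairing f N2 x2 g2 - y" "pairing f N2 x2 g2 - z"]
      by (simp add: algebra_simps)
    also have "2 * K * wnorm (\<lambda>n. comb N2 x2 g2 n - w n) \<le> e"
    proof -
      have "2 * K * wnorm (\<lambda>n. comb N2 x2 g2 n - w n) \<le> 2 * K * (e / (2 * K + 1))"
        using close K by (intro mult_left_mono) auto
      also have "\<dots> \<le> e" using K \<open>e > 0\<close> by (simp add: field_simps)
      finally show ?thesis .
    qed
    finally show "cmod (pairing f N x g - (y + z)) \<le> K * ?d + e" by simp
  qed
qed

lemma extension_value_scale:
  assumes f: "bounded_pairing f K" and v: "extension_value f K v y" "wl2 v"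
  shows "extension_value f K (\<lambda>n. c * v n) (cnj c * y)"
proof (cases "c = 0")
  case True
  thus ?thesis using extension_value_zero[OF f] by simp
next
  case False
  show ?thesis unfolding extension_value_def
  proof (intro allI impI)
    fix N x g assume adm: "admissible N x"
    let ?g = "\<lambda>i::nat. inverse c * g i"
    have "cmod c * cmod (pairing f N x ?g - y) \<le> cmod c * (K * wnorm (\<lambda>n. comb N x ?g n - v n))"
      using v(1) adm unfolding extension_value_def by (intro mult_left_mono) auto
    also have "cmod c * cmod (pairing f N x ?g - y) = cmod (pairing f N x g - cnj c * y)"
    proof -
      have "cnj c * cnj (inverse c) = 1" using False by (simp add: complex_cnj_mult[symmetric])
      hence "cnj c * (pairing f N x ?g - y) = pairing f N x g - cnj c * y"
        unfolding pairing_scale by (simp add: algebra_simps mult.assoc[symmetric])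
      thus ?thesis by (metis complex_mod_cnj norm_mult)
    qed
    also have "cmod c * (K * wnorm (\<lambda>n. comb N x ?g n - v n)) = K * wnorm (\<lambda>n. comb N x g n - c * v n)"
    proof -
      have "cmod c * wnorm (\<lambda>n. comb N x ?g n - v n) = wnorm (\<lambda>n. c * (comb N x ?g n - v n))"
        using adm v(2) by (intro wnorm_scale[symmetric] wl2_diff wl2_comb)
      also have "(\<lambda>n. c * (comb N x ?g n - v n)) = (\<lambda>n. comb N x g n - c * v n)"
        using False unfolding comb_scale by (simp add: right_diff_distrib mult.assoc[symmetric])
      finally show ?thesis by (simp add: mult_ac)
    qed
    finally show "cmod (pairing f N x g - cnj c * y) \<le> K * wnorm (\<lambda>n. comb N x g n - c * v n)" .
  qed
qed

lemma wnorm_unit_remainder_tendsto: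
  assumes "wl2 W"
  shows "(\<lambda>M. wnorm (\<lambda>m. W m - (\<Sum>n=1..M. W n * unit_vec n m))) \<longlonglongrightarrow> 0"
proof -
  let ?a = "\<lambda>m. \<omega> m * (cmod (W m))\<^sup>2"
  have a: "summable ?a" using assms unfolding wl2_def .
  have remainder: "wnorm2 (\<lambda>m. W m - (\<Sum>n=1..M. W n * unit_vec n m)) = wnorm2 W - (\<Sum>m<Suc M. ?a m)" for M
  proof -
    have "\<omega> m * (cmod (W m - (\<Sum>n=1..M. W n * unit_vec n m)))\<^sup>2 = (if m < Suc M then 0 else ?a m)" for m
      using weight_0 by (cases "m = 0") (auto simp: sum_unit_vec)
    hence "wnorm2 (\<lambda>m. W m - (\<Sum>n=1..M. W n * unit_vec n m)) = (\<Sum>m. if m < Suc M then 0 else ?a m)"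
      unfolding wnorm2_def by simp
    also have "\<dots> = (\<Sum>i. ?a (i + Suc M))"
      using suminf_split_initial_segment[of "\<lambda>m. if m < Suc M then 0 else ?a m" "Suc M"]
        summable_iff_shift[of "\<lambda>m. if m < Suc M then 0 else ?a m" "Suc M"] summable_iff_shift[of ?a "Suc M"] a
      by simp
    also have "\<dots> = wnorm2 W - (\<Sum>m<Suc M. ?a m)"
      unfolding wnorm2_def using suminf_split_initial_segment[OF a, of "Suc M"] by simp
    finally show ?thesis .
  qed
  have "(\<lambda>M. sqrt (wnorm2 W - (\<Sum>m<Suc M. ?a m))) \<longlonglongrightarrow> sqrt (wnorm2 W - wnorm2 W)"
    using wnorm2_partial_sums_tendsto[OF assms]
    by (intro tendsto_intros) (rule LIMSEQ_Suc)
  thus ?thesis unfolding wnorm_def remainder by simp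
qed

lemma feature_poly_tail_le:
  assumes adm: "admissible N x" and "M \<le> M'"
  shows "cmod ((\<Sum>n=1..M'. cnj (comb N x g n) * c n) - pairing (feature_poly M c) N x g) \<le>
         sqrt (\<Sum>n=Suc M..M'. (cmod (c n))\<^sup>2 / \<omega> n) * wnorm (comb N x g)"
proof -
  let ?W = "comb N x g"
  have split: "{1..M'} = {1..M} \<union> {Suc M..M'}" using assms(2) by auto
  have "(\<Sum>n=1..M'. cnj (?W n) * c n) - pairing (feature_poly M c) N x g = (\<Sum>n=Suc M..M'. c n * cnj (?W n))"
    unfolding pairing_feature_poly split by (subst sum.union_disjoint) (auto simp: mult.commute)
  also have "cmod \<dots> \<le> sqrt (\<Sum>n=Suc M..M'. (cmod (c n))\<^sup>2 / \<omega> n) * sqrt (\<Sum>n=Suc M..M'. \<omega> n * (cmod (?W n))\<^sup>2)"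
    by (rule weighted_Cauchy_Schwarz) (auto intro: weight_pos)
  also have "\<dots> \<le> sqrt (\<Sum>n=Suc M..M'. (cmod (c n))\<^sup>2 / \<omega> n) * wnorm ?W"
    using adm weight_nonneg by (intro mult_left_mono sqrt_sum_le_wnorm wl2_comb) (auto intro: sum_nonneg)
  finally show ?thesis .
qed

lemma extension_value_sum:
  assumes f: "bounded_pairing f K" and K: "K \<ge> 0" and "finite F"
    and v: "\<And>j. j \<in> F \<Longrightarrow> approximable (v j) \<and> extension_value f K (v j) (y j)"
  shows "extension_value f K (\<lambda>n. \<Sum>j\<in>F. v j n) (\<Sum>j\<in>F. y j)"
  using \<open>finite F\<close> v
proof (induction F rule: finite_induct)
  case empty
  thus ?case using extension_value_zero[OF f] by simp
next
  case (insert j F)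
  have "extension_value f K (\<lambda>n. (\<Sum>j\<in>F. v j n) + v j n) ((\<Sum>j\<in>F. y j) + y j)"
    using insert K by (intro extension_value_add wl2_sum approximable_wl2) auto
  thus ?case using insert by (simp add: add.commute)
qed

end

locale total_feature_space = feature_space +
  assumes approximable_unit_vec: "n > 0 \<Longrightarrow> approximable (unit_vec n)"
begin

definition pairing_coeff :: "(complex \<Rightarrow> complex) \<Rightarrow> real \<Rightarrow> nat \<Rightarrow> complex" where
  "pairing_coeff f K n = (SOME y. extension_value f K (unit_vec n) y)"

context
  fixes f :: "complex \<Rightarrow> complex" and K :: real
  assumes f: "bounded_pairing f K" and K: "K \<ge> 0"
begin

lemma extension_value_pairing_coeff: "n > 0 \<Longrightarrow> extension_value f K (unit_vec n) (pairing_coeff f K n)"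
  unfolding pairing_coeff_def
  using extension_value_exists[OF f K approximable_unit_vec] by (rule someI_ex)

lemma extension_value_unit_comb:
  "extension_value f K (\<lambda>m. \<Sum>n=1..M. a n * unit_vec n m) (\<Sum>n=1..M. cnj (a n) * pairing_coeff f K n)"
  by (rule extension_value_sum[OF f K])
    (auto intro!: approximable_scale approximable_unit_vec extension_value_scale[OF f]
      extension_value_pairing_coeff approximable_wl2)

lemma pairing_coeff_Bessel: "(\<Sum>n=1..M. (cmod (pairing_coeff f K n))\<^sup>2 / \<omega> n) \<le> K\<^sup>2"
proof -
  define B where "B = (\<Sum>n=1..M. (cmod (pairing_coeff f K n))\<^sup>2 / \<omega> n)"
  have B: "B \<ge> 0" unfolding B_def using weight_nonneg by (intro sum_nonneg) auto
  txt \<open>The extension bound for the empty family at \<open>v = \<Sum> (c\<^sub>n / \<omega>\<^sub>n) e\<^sub>n\<close> reads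
    \<open>B \<le> K \<parallel>v\<parallel> = K \<surd>B\<close>.\<close>
  define v where "v m = (\<Sum>n=1..M. (pairing_coeff f K n / \<omega> n) * unit_vec n m)" for m
  have v_eq: "v m = (if m \<in> {1..M} then pairing_coeff f K m / \<omega> m else 0)" for m
    unfolding v_def by (rule sum_unit_vec) simp
  have "extension_value f K v (\<Sum>n=1..M. cnj (pairing_coeff f K n / \<omega> n) * pairing_coeff f K n)"
    unfolding v_def by (rule extension_value_unit_comb)
  moreover have "(\<Sum>n=1..M. cnj (pairing_coeff f K n / \<omega> n) * pairing_coeff f K n) = B"
    unfolding B_def of_real_sum by (intro sum.cong refl) (simp add: cnj_mult_self)
  ultimately have "cmod (pairing f 0 (\<lambda>_. 0) (\<lambda>_. 0) - B) \<le> K * wnorm (\<lambda>m. comb 0 (\<lambda>_. 0) (\<lambda>_. 0) m - v m)"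
    unfolding extension_value_def by (metis admissible_empty)
  moreover have "wl2 v" by (rule wl2_finite_support[of M]) (simp add: v_eq)
  moreover have "wnorm2 v = B"
  proof -
    have "wnorm2 v = (\<Sum>m=1..M. \<omega> m * (cmod (v m))\<^sup>2)"
      unfolding wnorm2_def by (rule suminf_finite) (auto simp: v_eq)
    also have "\<dots> = B"
      unfolding B_def using weight_pos
      by (intro sum.cong refl) (simp add: v_eq norm_divide power_divide power2_eq_square)
    finally show ?thesis .
  qed
  ultimately have "B \<le> K * sqrt B"
    using wnorm_scale[of v "-1"] B by (simp add: wnorm_def)
  thus ?thesis using B K unfolding B_def by (rule le_square_if_le_mult_sqrt)
qed

lemma summable_pairing_coeff: "summable (\<lambda>n. (cmod (pairing_coeff f K n))\<^sup>2 / \<omega> n)"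
proof (rule summableI_nonneg_bounded)
  show "(cmod (pairing_coeff f K n))\<^sup>2 / \<omega> n \<ge> 0" for n using weight_nonneg[of n] by simp
  show "(\<Sum>n<M. (cmod (pairing_coeff f K n))\<^sup>2 / \<omega> n) \<le> K\<^sup>2" for M
  proof -
    have "(\<Sum>n<M. (cmod (pairing_coeff f K n))\<^sup>2 / \<omega> n) \<le> (\<Sum>n=0..M. (cmod (pairing_coeff f K n))\<^sup>2 / \<omega> n)"
      using weight_nonneg by (intro sum_mono2) auto
    also have "\<dots> = (\<Sum>n=1..M. (cmod (pairing_coeff f K n))\<^sup>2 / \<omega> n)"
      using weight_0 by (simp add: sum.atLeast_Suc_atMost)
    finally show ?thesis using pairing_coeff_Bessel[of M] by linarith
  qed
qed

theorem bounded_pairing_feature_poly_approx: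
  assumes "\<epsilon> > 0"
  shows "\<exists>M. bounded_pairing (\<lambda>s. f s - feature_poly M (pairing_coeff f K) s) \<epsilon>"
proof -
  define cf where "cf = pairing_coeff f K"
  obtain M where M: "\<And>M'. norm (\<Sum>n=Suc M..<M'. (cmod (cf n))\<^sup>2 / \<omega> n) < \<epsilon>\<^sup>2"
    using summable_pairing_coeff \<open>\<epsilon> > 0\<close> unfolding summable_Cauchy cf_def
    by (metis le_SucI order_refl zero_less_power)
  have "cmod (pairing f N x g - pairing (feature_poly M cf) N x g) \<le> \<epsilon> * wnorm (comb N x g)"
    if adm: "admissible N x" for N x g
  proof (rule field_le_epsilon)
    fix \<delta> :: real assume "\<delta> > 0"
    let ?W = "comb N x g"
    have W: "wl2 ?W" using adm by (rule wl2_comb)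
    have "(\<lambda>M'. K * wnorm (\<lambda>m. ?W m - (\<Sum>n=1..M'. ?W n * unit_vec n m))) \<longlonglongrightarrow> K * 0"
      by (intro tendsto_mult_left wnorm_unit_remainder_tendsto W)
    hence "\<forall>\<^sub>F M' in sequentially. K * wnorm (\<lambda>m. ?W m - (\<Sum>n=1..M'. ?W n * unit_vec n m)) < \<delta> \<and> M' \<ge> M"
      using \<open>\<delta> > 0\<close> by (intro eventually_conj order_tendstoD(2) eventually_ge_at_top) auto
    then obtain M' where M': "M' \<ge> M"
      and rem: "K * wnorm (\<lambda>m. ?W m - (\<Sum>n=1..M'. ?W n * unit_vec n m)) < \<delta>"
      by (auto simp: eventually_sequentially)
    have "cmod (pairing f N x g - (\<Sum>n=1..M'. cnj (?W n) * cf n)) \<le>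
          K * wnorm (\<lambda>m. ?W m - (\<Sum>n=1..M'. ?W n * unit_vec n m))"
      using extension_value_unit_comb[of ?W M'] adm unfolding extension_value_def cf_def by blast
    moreover have "cmod ((\<Sum>n=1..M'. cnj (?W n) * cf n) - pairing (feature_poly M cf) N x g) \<le> \<epsilon> * wnorm ?W"
    proof -
      have "(\<Sum>n=Suc M..M'. (cmod (cf n))\<^sup>2 / \<omega> n) < \<epsilon>\<^sup>2"
        using M[of "Suc M'"] by (simp add: atLeastLessThanSuc_atLeastAtMost)
      hence "sqrt (\<Sum>n=Suc M..M'. (cmod (cf n))\<^sup>2 / \<omega> n) \<le> \<epsilon>"
        using \<open>\<epsilon> > 0\<close> by (simp add: real_less_lsqrt less_imp_le)
      thus ?thesis
        using feature_poly_tail_le[OF adm M', of g cf] mult_right_mono[OF _ wnorm_nonneg[OF W]] by force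
    qed
    ultimately show "cmod (pairing f N x g - pairing (feature_poly M cf) N x g) \<le> \<epsilon> * wnorm ?W + \<delta>"
      using rem norm_triangle_ineq[of "pairing f N x g - (\<Sum>n=1..M'. cnj (?W n) * cf n)"
          "(\<Sum>n=1..M'. cnj (?W n) * cf n) - pairing (feature_poly M cf) N x g"]
      by simp
  qed
  thus ?thesis unfolding bounded_pairing_def pairing_diff cf_def by blast
qed

end

end

section \<open>The block kernel\<close>

definition dirichlet_vec :: "complex \<Rightarrow> nat \<Rightarrow> complex" where
  "dirichlet_vec x n = of_nat n powr (- cnj x)"

lemma norm_nat_powr: "cmod (of_nat m powr (- s)) = real m powr (- Re s)"
  by (subst norm_powr_real_powr) auto

lemma cnj_dirichlet_vec: "cnj (dirichlet_vec x n) = of_nat n powr (- x)"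
  unfolding dirichlet_vec_def by (simp add: cnj_powr)

lemma nat_powr_neg_le_1: "\<sigma> \<ge> 0 \<Longrightarrow> real m powr (- \<sigma>) \<le> 1"
  by (cases "m = 0") (auto simp: powr_minus inverse_le_1_iff ge_one_powr_ge_zero)

lemma dirichlet_vec_of_real: "dirichlet_vec (of_real \<sigma>) m = of_real (real m powr (- \<sigma>))"
proof -
  have "dirichlet_vec (of_real \<sigma>) m = of_real (real m) powr of_real (- \<sigma>)"
    unfolding dirichlet_vec_def by simp
  also have "\<dots> = of_real (real m powr (- \<sigma>))" by (rule powr_of_real) simp
  finally show ?thesis .
qed

lemma powr_divide_eq_mult: "x \<ge> 0 \<Longrightarrow> y \<ge> 0 \<Longrightarrow> (x / y) powr a = x powr a * y powr (- a)"
  for x y a :: real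
  by (subst powr_divide) (simp_all add: powr_minus divide_inverse)

definition dirichlet_residual :: "nat \<Rightarrow> real \<Rightarrow> nat \<Rightarrow> complex" where
  "dirichlet_residual n \<sigma> m = (if m > n then of_real ((real n / real m) powr \<sigma>) else 0)"

text \<open>Subtracting the first \<open>n - 1\<close> terms from \<open>m \<mapsto> m\<^sup>-\<^sup>\<sigma>\<close> and rescaling by \<open>n\<^sup>\<sigma>\<close> leaves
  the unit vector at \<open>n\<close> plus a residual that vanishes as \<open>\<sigma> \<rightarrow> \<infinity>\<close>.\<close>
lemma dirichlet_vec_peel:
  assumes "n > 0"
  shows "of_real (real n powr \<sigma>) *
           (dirichlet_vec (of_real \<sigma>) m - (\<Sum>i\<in>{1..<n}. of_real (real i powr (- \<sigma>)) * unit_vec i m)) =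
         unit_vec n m + dirichlet_residual n \<sigma> m"
proof -
  have peeled: "(\<Sum>i\<in>{1..<n}. of_real (real i powr (- \<sigma>)) * unit_vec i m) =
               (if m \<in> {1..<n} then of_real (real m powr (- \<sigma>)) else 0)"
    by (rule sum_unit_vec) simp
  consider "m = 0" | "m \<in> {1..<n}" | "m = n" | "m > n" by fastforce
  thus ?thesis
  proof cases
    case 3
    have "real n powr \<sigma> * real n powr (- \<sigma>) = 1" using assms by (simp add: powr_add[symmetric])
    thus ?thesis using 3 unfolding peeled
      by (simp add: unit_vec_def dirichlet_residual_def dirichlet_vec_of_real flip: of_real_mult)
  next
    case 4
    have "real n powr \<sigma> * real m powr (- \<sigma>) = (real n / real m) powr \<sigma>"
      by (simp add: powr_divide_eq_mult)
    thus ?thesis using 4 unfolding peeled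
      by (simp add: unit_vec_def dirichlet_residual_def dirichlet_vec_of_real flip: of_real_mult)
  qed (use assms in \<open>unfold peeled, auto simp: unit_vec_def dirichlet_residual_def dirichlet_vec_of_real\<close>)
qed

locale block_kernel =
  fixes k :: nat and b :: "nat \<Rightarrow> nat \<Rightarrow> complex" and c :: "nat \<Rightarrow> complex"
    and d :: "nat \<Rightarrow> real" and \<rho> :: real
  assumes k_ge_1: "k \<ge> 1"
    and in_S: "in_S k b c d"
    and s_val_pos: "s_val k b c d > 0"
    and rho_gt_1: "\<rho> > 1"
    and d_bigo: "d \<in> O(\<lambda>l. real l powr (\<rho> - 1))"
begin

abbreviation "a \<equiv> block_mat k b c d"

lemma psd_b: "psd_mat k b"
  using in_S unfolding in_S_def by blast

lemma d_pos: "l > k \<Longrightarrow> d l > 0"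
  using in_S unfolding in_S_def by blast

definition energy :: "nat \<Rightarrow> real" where
  "energy l = (if l > k then (cmod (c l))\<^sup>2 / d l else 0)"

lemma energy_nonneg: "energy l \<ge> 0"
  unfolding energy_def using d_pos by (auto intro: divide_nonneg_pos)

lemma summable_energy: "summable energy"
proof -
  have "(\<lambda>l. energy (l + (k + 1))) = (\<lambda>l. (cmod (c (k + 1 + l)))\<^sup>2 / d (k + 1 + l))"
    unfolding energy_def by (auto simp: add.commute)
  thus ?thesis using in_S summable_iff_shift[of energy "k + 1"] unfolding in_S_def by simp
qed

lemma suminf_energy: "(\<Sum>l. energy l) = (\<Sum>l. (cmod (c (k + 1 + l)))\<^sup>2 / d (k + 1 + l))"
proof -
  have "(\<lambda>l. energy (l + (k + 1))) = (\<lambda>l. (cmod (c (k + 1 + l)))\<^sup>2 / d (k + 1 + l))"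
    unfolding energy_def by (auto simp: add.commute)
  moreover have "sum energy {..<k + 1} = 0" unfolding energy_def by simp
  ultimately show ?thesis using suminf_split_initial_segment[OF summable_energy, of "k + 1"] by simp
qed

lemma sum_energy_le: "finite F \<Longrightarrow> sum energy F \<le> (\<Sum>l. energy l)"
  using summable_energy energy_nonneg by (intro sum_le_suminf) auto

lemma energy_lt_lambda_min: "real k * (\<Sum>l. energy l) < lambda_min k b"
  using s_val_pos unfolding s_val_def suminf_energy by simp

lemma suminf_energy_nonneg: "(\<Sum>l. energy l) \<ge> 0"
  using summable_energy energy_nonneg by (intro suminf_nonneg) auto

lemma lambda_min_pos: "lambda_min k b > 0"
  using energy_lt_lambda_min mult_nonneg_nonneg[OF of_nat_0_le_iff[of k] suminf_energy_nonneg] by linarith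

lemma summable_abs_d_powr: "t > \<rho> \<Longrightarrow> summable (\<lambda>n. \<bar>d n\<bar> * real n powr (- t))"
proof -
  assume t: "t > \<rho>"
  obtain C where C: "\<forall>\<^sub>F l in sequentially. norm (d l) \<le> C * norm (real l powr (\<rho> - 1))"
    using d_bigo by (elim landau_o.bigE) auto
  have "\<forall>\<^sub>F n in sequentially. norm (\<bar>d n\<bar> * real n powr (- t)) \<le> C * real n powr (\<rho> - 1 - t)"
    using C eventually_gt_at_top[of 0]
  proof eventually_elim
    case (elim n)
    have "norm (\<bar>d n\<bar> * real n powr (- t)) \<le> C * real n powr (\<rho> - 1) * real n powr (- t)"
      using elim(1) by (simp add: mult_right_mono)
    also have "\<dots> = C * real n powr (\<rho> - 1 - t)"
      using elim(2) by (simp add: powr_add[symmetric] mult.assoc)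
    finally show ?case .
  qed
  moreover have "summable (\<lambda>n. C * real n powr (\<rho> - 1 - t))"
    using t by (intro summable_mult) (simp add: summable_real_powr_iff)
  ultimately show ?thesis by (rule summable_comparison_test_ev)
qed

definition beta :: real where
  "beta = 1 + (\<Sum>i=1..k. \<Sum>j=1..k. cmod (b i j))"

lemma beta_ge_1: "beta \<ge> 1"
  unfolding beta_def by (simp add: sum_nonneg)

lemma norm_b_le_beta: "i \<in> {1..k} \<Longrightarrow> j \<in> {1..k} \<Longrightarrow> cmod (b i j) \<le> beta"
proof -
  assume "i \<in> {1..k}" "j \<in> {1..k}"
  hence "cmod (b i j) \<le> (\<Sum>i=1..k. \<Sum>j=1..k. cmod (b i j))"
    by (intro order.trans[OF member_le_sum[of j] member_le_sum[of i]]) (auto intro: sum_nonneg)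
  thus ?thesis unfolding beta_def by simp
qed

definition row_bound :: "nat \<Rightarrow> real" where
  "row_bound m = (if m \<le> k then beta else cmod (c m))"

lemma row_bound_nonneg: "row_bound m \<ge> 0"
  unfolding row_bound_def using beta_ge_1 by simp

lemma norm_block_mat_le:
  assumes "m \<ge> 1" "n \<ge> 1"
  shows "cmod (a m n) \<le> row_bound m * row_bound n + (if m = n then \<bar>d m\<bar> else 0)"
proof -
  have "cmod (a m n) \<le> row_bound m * row_bound n"
    if "\<not> (m = n \<and> m > k)"
  proof (cases "m \<le> k"; cases "n \<le> k")
    assume "m \<le> k" "n \<le> k"
    hence "cmod (a m n) \<le> beta" using assms norm_b_le_beta by (simp add: block_mat_def)
    also have "\<dots> \<le> beta * beta" using beta_ge_1 by simp
    finally show ?thesis using \<open>m \<le> k\<close> \<open>n \<le> k\<close> by (simp add: row_bound_def)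
  next
    assume "m \<le> k" "\<not> n \<le> k"
    thus ?thesis using beta_ge_1 by (simp add: block_mat_def row_bound_def mult_le_cancel_right1)
  next
    assume "\<not> m \<le> k" "n \<le> k"
    thus ?thesis using beta_ge_1 by (simp add: block_mat_def row_bound_def mult_le_cancel_left1)
  next
    assume "\<not> m \<le> k" "\<not> n \<le> k"
    thus ?thesis using that by (simp add: block_mat_def row_bound_def)
  qed
  moreover have "cmod (a m n) \<le> \<bar>d m\<bar>" if "m = n" "m > k"
    using that by (simp add: block_mat_def)
  moreover have "row_bound m * row_bound n \<ge> 0" by (simp add: row_bound_nonneg)
  ultimately show ?thesis by (cases "m = n \<and> m > k") (auto simp: add_increasing)
qed

lemma summable_row_bound_powr:
  assumes "\<sigma> > \<rho>"
  shows "summable (\<lambda>m. row_bound m * real m powr (- \<sigma>))"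
proof -
  have bound: "row_bound m * real m powr (- \<sigma>) \<le>
        (if m \<le> k then beta else 0) + (energy m + \<bar>d m\<bar> * real m powr (- (2 * \<sigma>)))" for m
  proof (cases "m \<le> k")
    case True
    have "beta * real m powr (- \<sigma>) \<le> beta"
      using beta_ge_1 nat_powr_neg_le_1[of \<sigma> m] assms rho_gt_1 by (intro mult_left_le) auto
    moreover have "energy m + \<bar>d m\<bar> * real m powr (- (2 * \<sigma>)) \<ge> 0" using energy_nonneg[of m] by simp
    ultimately show ?thesis using True by (simp add: row_bound_def)
  next
    case False
    have "(real m powr (- \<sigma>))\<^sup>2 = real m powr (- (2 * \<sigma>))"
      by (simp add: power2_eq_square powr_add[symmetric])
    hence "2 * (cmod (c m) * real m powr (- \<sigma>)) \<le> (cmod (c m))\<^sup>2 / d m + d m * real m powr (- (2 * \<sigma>))"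
      using False d_pos two_mult_le_amgm[of "d m" "cmod (c m)" "real m powr (- \<sigma>)"] by simp
    moreover have "cmod (c m) * real m powr (- \<sigma>) \<ge> 0" by simp
    ultimately have "cmod (c m) * real m powr (- \<sigma>) \<le> (cmod (c m))\<^sup>2 / d m + d m * real m powr (- (2 * \<sigma>))"
      by linarith
    thus ?thesis using False d_pos[of m] by (simp add: row_bound_def energy_def)
  qed
  have "summable (\<lambda>m. (if m \<le> k then beta else 0) + (energy m + \<bar>d m\<bar> * real m powr (- (2 * \<sigma>))))"
    using assms rho_gt_1
    by (intro summable_add summable_energy summable_abs_d_powr summable_finite[of "{..k}"]) auto
  thus ?thesis
    by (rule summable_comparison_test'[where N = 0]) (simp add: row_bound_nonneg bound)
qed

lemma norm_dir_terms_le: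
  "cmod (dir_terms a s u m n) \<le>
     row_bound (Suc m) * real (Suc m) powr (- Re s) * (row_bound (Suc n) * real (Suc n) powr (- Re u)) +
     (if m = n then \<bar>d (Suc m)\<bar> * real (Suc m) powr (- (Re s + Re u)) else 0)"
proof -
  have "cmod (dir_terms a s u m n) =
        cmod (a (Suc m) (Suc n)) * (real (Suc m) powr (- Re s) * real (Suc n) powr (- Re u))"
    unfolding dir_terms_def norm_mult norm_nat_powr by simp
  also have "\<dots> \<le> (row_bound (Suc m) * row_bound (Suc n) + (if m = n then \<bar>d (Suc m)\<bar> else 0)) *
                   (real (Suc m) powr (- Re s) * real (Suc n) powr (- Re u))"
    using norm_block_mat_le[of "Suc m" "Suc n"] by (intro mult_right_mono) auto
  also have "\<dots> = row_bound (Suc m) * real (Suc m) powr (- Re s) * (row_bound (Suc n) * real (Suc n) powr (- Re u)) +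
     (if m = n then \<bar>d (Suc m)\<bar> * real (Suc m) powr (- (Re s + Re u)) else 0)"
    by (simp add: algebra_simps powr_add[symmetric])
  finally show ?thesis .
qed

lemma dir_terms_summable_on:
  assumes "Re s > \<rho>" "Re u > \<rho>"
  shows "(\<lambda>(m, n). dir_terms a s u m n) summable_on UNIV"
proof -
  have "summable (\<lambda>m. row_bound (Suc m) * real (Suc m) powr (- t))" if "t > \<rho>" for t
    using summable_row_bound_powr[OF that] summable_Suc_iff[of "\<lambda>m. row_bound m * real m powr (- t)"]
    by simp
  moreover have "summable (\<lambda>m. \<bar>d (Suc m)\<bar> * real (Suc m) powr (- (Re s + Re u)))"
    using summable_abs_d_powr[of "Re s + Re u"] assms rho_gt_1
      summable_Suc_iff[of "\<lambda>m. \<bar>d m\<bar> * real m powr (- (Re s + Re u))"]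
    by simp
  ultimately have "(\<lambda>(m, n). row_bound (Suc m) * real (Suc m) powr (- Re s) *
        (row_bound (Suc n) * real (Suc n) powr (- Re u)) +
        (if m = n then \<bar>d (Suc m)\<bar> * real (Suc m) powr (- (Re s + Re u)) else 0)) summable_on UNIV"
    using assms by (intro summable_on_product_plus_diagonal) (auto intro: row_bound_nonneg mult_nonneg_nonneg)
  hence "(\<lambda>p. norm ((\<lambda>(m, n). dir_terms a s u m n) p)) summable_on UNIV"
    by (rule Infinite_Sum.abs_summable_on_comparison_test')
      (clarsimp simp only: case_prod_beta split_paired_all fst_conv snd_conv, rule norm_dir_terms_le)
  thus ?thesis by (rule abs_summable_summable)
qed

theorem dirichlet_series_kernel_block: "dirichlet_series_kernel a \<rho>"
  unfolding dirichlet_series_kernel_def half_plane_def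
  using dir_terms_summable_on regularly_convergent_if_summable_on by blast

lemma kappa_diagonal_tendsto:
  assumes "s \<in> half_plane \<rho>" "u \<in> half_plane \<rho>"
  shows "(\<lambda>N. double_partial (dir_terms a s (cnj u)) (N, N)) \<longlonglongrightarrow> kappa a s u"
  unfolding kappa_def using assms
  by (intro double_partial_diagonal_tendsto dir_terms_summable_on) (auto simp: half_plane_def)

definition weight :: "nat \<Rightarrow> real" where
  "weight n = (if n = 0 then 0 else if n \<le> k then 1 else d n)"

definition block_form :: "nat \<Rightarrow> (nat \<Rightarrow> complex) \<Rightarrow> complex" where
  "block_form M w = (\<Sum>m=1..M. \<Sum>n=1..M. a m n * cnj (w m) * w n)"

definition head :: "(nat \<Rightarrow> complex) \<Rightarrow> complex" where
  "head w = (\<Sum>m=1..k. w m)"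

definition tail :: "nat \<Rightarrow> (nat \<Rightarrow> complex) \<Rightarrow> complex" where
  "tail M w = (\<Sum>l=k+1..M. c l * w l)"

definition diag_part :: "nat \<Rightarrow> (nat \<Rightarrow> complex) \<Rightarrow> real" where
  "diag_part M w = (\<Sum>l=k+1..M. d l * (cmod (w l))\<^sup>2)"

lemma diag_part_nonneg: "diag_part M w \<ge> 0"
  unfolding diag_part_def using d_pos by (intro sum_nonneg) (auto simp: less_imp_le)

lemma weighted_sum_split:
  assumes "M \<ge> k"
  shows "(\<Sum>n=1..M. weight n * (cmod (w n))\<^sup>2) = vec_norm2 k w + diag_part M w"
proof -
  have "{1..M} = {1..k} \<union> {k+1..M}" using assms by auto
  hence "(\<Sum>n=1..M. weight n * (cmod (w n))\<^sup>2) =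
         (\<Sum>n=1..k. weight n * (cmod (w n))\<^sup>2) + (\<Sum>n=k+1..M. weight n * (cmod (w n))\<^sup>2)"
    by (simp add: sum.union_disjoint)
  also have "\<dots> = vec_norm2 k w + diag_part M w"
    unfolding vec_norm2_def diag_part_def by (intro arg_cong2[where f = "(+)"] sum.cong) (auto simp: weight_def)
  finally show ?thesis .
qed

lemma block_form_split:
  assumes "M \<ge> k"
  shows "block_form M w =
    sesq_form k b w w + cnj (head w) * tail M w + cnj (tail M w) * head w + of_real (diag_part M w)"
proof -
  let ?A = "{1..k}" and ?B = "{k+1..M}"
  let ?g = "\<lambda>m n. a m n * cnj (w m) * w n"
  have split: "{1..M} = ?A \<union> ?B" using assms by auto
  have "block_form M w = (\<Sum>m\<in>?A. \<Sum>n\<in>?A. ?g m n) + (\<Sum>m\<in>?A. \<Sum>n\<in>?B. ?g m n) +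
                         ((\<Sum>m\<in>?B. \<Sum>n\<in>?A. ?g m n) + (\<Sum>m\<in>?B. \<Sum>n\<in>?B. ?g m n))"
    unfolding block_form_def split by (simp add: sum.union_disjoint sum.distrib)
  also have "(\<Sum>m\<in>?A. \<Sum>n\<in>?A. ?g m n) = sesq_form k b w w"
    unfolding sesq_form_def by (intro sum.cong refl) (auto simp: block_mat_def mult_ac)
  also have "(\<Sum>m\<in>?A. \<Sum>n\<in>?B. ?g m n) = (\<Sum>m\<in>?A. \<Sum>n\<in>?B. cnj (w m) * (c n * w n))"
    by (intro sum.cong refl) (auto simp: block_mat_def mult_ac)
  also have "\<dots> = cnj (head w) * tail M w"
    unfolding head_def tail_def cnj_sum sum_product ..
  also have "(\<Sum>m\<in>?B. \<Sum>n\<in>?A. ?g m n) = (\<Sum>m\<in>?B. \<Sum>n\<in>?A. cnj (c m * w m) * w n)"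
    by (intro sum.cong refl) (auto simp: block_mat_def mult_ac)
  also have "\<dots> = cnj (tail M w) * head w"
    unfolding head_def tail_def cnj_sum sum_product ..
  also have "(\<Sum>m\<in>?B. \<Sum>n\<in>?B. ?g m n) = (\<Sum>m\<in>?B. of_real (d m) * (cnj (w m) * w m))"
    by (intro sum.cong refl) (auto simp: block_mat_def mult_ac if_distrib if_distribR cong: if_cong)
  also have "\<dots> = of_real (diag_part M w)"
    unfolding diag_part_def of_real_sum by (intro sum.cong refl) (simp add: cnj_mult_self)
  finally show ?thesis by (simp add: add_ac)
qed

lemma norm_head_squared_le: "(cmod (head w))\<^sup>2 \<le> real k * vec_norm2 k w"
proof -
  have "cmod (\<Sum>m=1..k. 1 * cnj (w m)) \<le> sqrt (\<Sum>m=1..k. (cmod 1)\<^sup>2 / 1) * sqrt (\<Sum>m=1..k. 1 * (cmod (w m))\<^sup>2)"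
    by (rule weighted_Cauchy_Schwarz) auto
  hence "cmod (head w) \<le> sqrt (real k) * sqrt (vec_norm2 k w)"
    unfolding head_def vec_norm2_def by (simp flip: cnj_sum)
  hence "(cmod (head w))\<^sup>2 \<le> (sqrt (real k) * sqrt (vec_norm2 k w))\<^sup>2"
    by (intro power_mono) auto
  thus ?thesis by (simp add: power_mult_distrib vec_norm2_nonneg)
qed

lemma cross_term_le:
  assumes "\<theta> > 0"
  shows "2 * cmod (head w) * cmod (tail M w) \<le>
         (cmod (head w))\<^sup>2 * (\<Sum>l. energy l) / \<theta> + \<theta> * diag_part M w"
proof -
  define h where "h = cmod (head w)"
  have term_le: "2 * h * (cmod (c l) * cmod (w l)) \<le> h\<^sup>2 * energy l / \<theta> + \<theta> * (d l * (cmod (w l))\<^sup>2)"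
    if l: "l \<in> {k+1..M}" for l
  proof -
    have dl: "d l > 0" using d_pos l by auto
    have "2 * ((h * cmod (c l)) * cmod (w l)) \<le> (h * cmod (c l))\<^sup>2 / (\<theta> * d l) + \<theta> * d l * (cmod (w l))\<^sup>2"
      using assms dl by (intro two_mult_le_amgm) simp
    thus ?thesis using l by (simp add: energy_def power_mult_distrib mult_ac)
  qed
  have "2 * h * cmod (tail M w) \<le> 2 * h * (\<Sum>l=k+1..M. cmod (c l) * cmod (w l))"
    unfolding tail_def h_def by (intro mult_left_mono order.trans[OF norm_sum]) (auto simp: norm_mult)
  also have "\<dots> = (\<Sum>l=k+1..M. 2 * h * (cmod (c l) * cmod (w l)))" by (simp add: sum_distrib_left)
  also have "\<dots> \<le> (\<Sum>l=k+1..M. h\<^sup>2 * energy l / \<theta> + \<theta> * (d l * (cmod (w l))\<^sup>2))"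
    by (intro sum_mono term_le)
  also have "\<dots> = h\<^sup>2 / \<theta> * sum energy {k+1..M} + \<theta> * diag_part M w"
    unfolding diag_part_def by (simp add: sum.distrib sum_distrib_left)
  also have "\<dots> \<le> h\<^sup>2 / \<theta> * (\<Sum>l. energy l) + \<theta> * diag_part M w"
    using assms sum_energy_le[of "{k+1..M}"] by (intro add_mono mult_left_mono) auto
  finally show ?thesis unfolding h_def by simp
qed

lemma cross_term_Re_le:
  assumes "\<theta> > 0"
  shows "2 * \<bar>Re (cnj (head w) * tail M w)\<bar> \<le>
         real k * (\<Sum>l. energy l) / \<theta> * vec_norm2 k w + \<theta> * diag_part M w"
proof -
  have "2 * \<bar>Re (cnj (head w) * tail M w)\<bar> \<le> 2 * cmod (head w) * cmod (tail M w)"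
    using abs_Re_le_cmod[of "cnj (head w) * tail M w"] by (simp add: norm_mult)
  also have "\<dots> \<le> (cmod (head w))\<^sup>2 * (\<Sum>l. energy l) / \<theta> + \<theta> * diag_part M w"
    using assms by (rule cross_term_le)
  also have "(cmod (head w))\<^sup>2 * (\<Sum>l. energy l) / \<theta> \<le> real k * vec_norm2 k w * (\<Sum>l. energy l) / \<theta>"
    using norm_head_squared_le suminf_energy_nonneg assms
    by (intro divide_right_mono mult_right_mono) auto
  finally show ?thesis by (simp add: mult_ac)
qed

text \<open>\<open>theta\<close> is the midpoint of \<open>k \<Sum> energy / lambda_min k b\<close> and \<open>1\<close>, so that both coefficients
  in the lower bound for the block form are positive; this is where \<open>s_val k b c d > 0\<close> is used.\<close>
definition theta :: real where
  "theta = (lambda_min k b + real k * (\<Sum>l. energy l)) / (2 * lambda_min k b)"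

definition lower_const :: real where
  "lower_const = min (lambda_min k b - real k * (\<Sum>l. energy l) / theta) (1 - theta)"

definition upper_const :: real where
  "upper_const = beta + real k * (\<Sum>l. energy l) + 2"

lemma theta_pos: "theta > 0"
  unfolding theta_def using lambda_min_pos suminf_energy_nonneg
  by (intro divide_pos_pos add_pos_nonneg mult_nonneg_nonneg) auto

lemma theta_lt_1: "theta < 1"
  unfolding theta_def using lambda_min_pos energy_lt_lambda_min by (simp add: divide_less_eq)

lemma lower_const_pos: "lower_const > 0"
proof -
  let ?L = "lambda_min k b" and ?E = "real k * (\<Sum>l. energy l)"
  have "?E / theta = 2 * ?L * ?E / (?L + ?E)"
    unfolding theta_def using lambda_min_pos suminf_energy_nonneg by (simp add: field_simps)
  also have "\<dots> < ?L"
    using lambda_min_pos energy_lt_lambda_min suminf_energy_nonneg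
    by (simp add: divide_less_eq algebra_simps add_pos_nonneg)
  finally show ?thesis unfolding lower_const_def using theta_lt_1 by simp
qed

lemma upper_const_pos: "upper_const > 0"
  unfolding upper_const_def using beta_ge_1 suminf_energy_nonneg by (simp add: add_pos_nonneg)

lemma Re_block_form:
  assumes "M \<ge> k"
  shows "Re (block_form M w) = Re (sesq_form k b w w) + 2 * Re (cnj (head w) * tail M w) + diag_part M w"
  unfolding block_form_split[OF assms] by simp

lemma Im_block_form: "M \<ge> k \<Longrightarrow> Im (block_form M w) = 0"
  unfolding block_form_split using psd_mat_sesq_form[OF psd_b] by simp

lemma block_form_lower_bound:
  assumes "M \<ge> k"
  shows "lower_const * (\<Sum>n=1..M. weight n * (cmod (w n))\<^sup>2) \<le> Re (block_form M w)"
proof -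
  let ?E = "\<Sum>l. energy l"
  have "(lambda_min k b - real k * ?E / theta) * vec_norm2 k w + (1 - theta) * diag_part M w \<le> Re (block_form M w)"
    using Re_block_form[OF assms, of w] cross_term_Re_le[OF theta_pos, of w M]
      sesq_form_ge_lambda_min[OF psd_b k_ge_1, of w] abs_ge_minus_self[of "Re (cnj (head w) * tail M w)"]
    unfolding left_diff_distrib by linarith
  moreover have "lower_const * vec_norm2 k w \<le> (lambda_min k b - real k * ?E / theta) * vec_norm2 k w"
    unfolding lower_const_def using vec_norm2_nonneg by (intro mult_right_mono) auto
  moreover have "lower_const * diag_part M w \<le> (1 - theta) * diag_part M w"
    unfolding lower_const_def using diag_part_nonneg by (intro mult_right_mono) auto
  ultimately show ?thesis unfolding weighted_sum_split[OF assms] by (simp add: algebra_simps)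
qed

lemma block_form_upper_bound:
  assumes "M \<ge> k"
  shows "Re (block_form M w) \<le> upper_const * (\<Sum>n=1..M. weight n * (cmod (w n))\<^sup>2)"
proof -
  have "Re (sesq_form k b w w) \<le> (\<Sum>i=1..k. \<Sum>j=1..k. cmod (b i j)) * vec_norm2 k w"
    using norm_sesq_form_le complex_Re_le_cmod order_trans by blast
  also have "\<dots> \<le> beta * vec_norm2 k w"
    unfolding beta_def using vec_norm2_nonneg by (intro mult_right_mono) auto
  finally have "Re (block_form M w) \<le> (beta + real k * (\<Sum>l. energy l)) * vec_norm2 k w + 2 * diag_part M w"
    using Re_block_form[OF assms, of w] cross_term_Re_le[of 1 w M] abs_ge_self[of "Re (cnj (head w) * tail M w)"]
    unfolding distrib_right by simp
  also have "\<dots> \<le> upper_const * (vec_norm2 k w + diag_part M w)"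
    unfolding upper_const_def using vec_norm2_nonneg diag_part_nonneg beta_ge_1 suminf_energy_nonneg
    by (simp add: algebra_simps add_nonneg_nonneg mult_nonneg_nonneg)
  finally show ?thesis unfolding weighted_sum_split[OF assms] .
qed

lemma summable_weight_dirichlet_vec:
  assumes "Re x > \<rho>"
  shows "summable (\<lambda>n. weight n * (cmod (dirichlet_vec x n))\<^sup>2)"
proof (rule summable_comparison_test'[where N = 0])
  have "(cmod (dirichlet_vec x n))\<^sup>2 = real n powr (- (2 * Re x))" for n
    unfolding dirichlet_vec_def norm_nat_powr by (simp add: power2_eq_square powr_add[symmetric])
  moreover have "weight n \<le> 1 + \<bar>d n\<bar>" "weight n \<ge> 0" for n
    unfolding weight_def using d_pos by (auto simp: less_imp_le)
  ultimately show "norm (weight n * (cmod (dirichlet_vec x n))\<^sup>2) \<le>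
                   real n powr (- (2 * Re x)) + \<bar>d n\<bar> * real n powr (- (2 * Re x))" for n
    using mult_right_mono[of "weight n" "1 + \<bar>d n\<bar>" "real n powr (- (2 * Re x))"]
    by (simp add: algebra_simps)
  show "summable (\<lambda>n. real n powr (- (2 * Re x)) + \<bar>d n\<bar> * real n powr (- (2 * Re x)))"
    using assms rho_gt_1 by (intro summable_add summable_abs_d_powr) (auto simp: summable_real_powr_iff)
qed

sublocale feature_space weight "half_plane \<rho>" dirichlet_vec
proof unfold_locales
  show nonneg: "weight n \<ge> 0" for n unfolding weight_def using d_pos by (auto simp: less_imp_le)
  show "weight 0 = 0" unfolding weight_def by simp
  show "n > 0 \<Longrightarrow> weight n > 0" for n unfolding weight_def using d_pos by auto
  show "x \<in> half_plane \<rho> \<Longrightarrow> wl2_space.wl2 weight (dirichlet_vec x)" for x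
    using summable_weight_dirichlet_vec unfolding wl2_space.wl2_def[OF wl2_space.intro[OF nonneg]] half_plane_def
    by simp
qed

definition gram :: "nat \<Rightarrow> (nat \<Rightarrow> complex) \<Rightarrow> (nat \<Rightarrow> complex) \<Rightarrow> complex" where
  "gram N x g = (\<Sum>i<N. \<Sum>j<N. cnj (g i) * g j * kappa a (x i) (x j))"

lemma gram_double_partial_eq_block_form:
  "(\<Sum>i<N. \<Sum>j<N. cnj (g i) * g j * double_partial (dir_terms a (x i) (cnj (x j))) (M, M)) =
   block_form M (comb N x g)"
proof -
  let ?p = "\<lambda>i m. of_nat (Suc m) powr (- x i)" and ?q = "\<lambda>j n. dirichlet_vec (x j) (Suc n)"
  let ?A = "\<lambda>m n. a (Suc m) (Suc n)"
  let ?t = "\<lambda>i j m n. cnj (g i) * g j * (?A m n * ?p i m * ?q j n)"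
  have "(\<Sum>i<N. \<Sum>j<N. cnj (g i) * g j * double_partial (dir_terms a (x i) (cnj (x j))) (M, M)) =
        (\<Sum>i<N. \<Sum>j<N. \<Sum>m<M. \<Sum>n<M. ?t i j m n)"
    unfolding double_partial_def dir_terms_def dirichlet_vec_def by (simp add: sum_distrib_left)
  also have "\<dots> = (\<Sum>i<N. \<Sum>m<M. \<Sum>j<N. \<Sum>n<M. ?t i j m n)"
    by (rule sum.cong[OF refl], rule sum.swap)
  also have "\<dots> = (\<Sum>m<M. \<Sum>i<N. \<Sum>j<N. \<Sum>n<M. ?t i j m n)"
    by (rule sum.swap)
  also have "\<dots> = (\<Sum>m<M. \<Sum>i<N. \<Sum>n<M. \<Sum>j<N. ?t i j m n)"
    by (rule sum.cong[OF refl], rule sum.cong[OF refl], rule sum.swap)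
  also have "\<dots> = (\<Sum>m<M. \<Sum>n<M. \<Sum>i<N. \<Sum>j<N. ?t i j m n)"
    by (rule sum.cong[OF refl], rule sum.swap)
  also have "\<dots> = (\<Sum>m<M. \<Sum>n<M. ?A m n * cnj (comb N x g (Suc m)) * comb N x g (Suc n))"
  proof (intro sum.cong refl)
    fix m n
    have "?A m n * ((\<Sum>i<N. cnj (g i) * ?p i m) * (\<Sum>j<N. g j * ?q j n)) =
          (\<Sum>i<N. \<Sum>j<N. ?A m n * (cnj (g i) * ?p i m * (g j * ?q j n)))"
      by (subst sum_product) (simp only: sum_distrib_left)
    also have "\<dots> = (\<Sum>i<N. \<Sum>j<N. ?t i j m n)"
      by (intro sum.cong refl) (simp add: mult_ac)
    finally have "(\<Sum>i<N. \<Sum>j<N. ?t i j m n) = ?A m n * ((\<Sum>i<N. cnj (g i) * ?p i m) * (\<Sum>j<N. g j * ?q j n))" ..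
    thus "(\<Sum>i<N. \<Sum>j<N. ?t i j m n) = ?A m n * cnj (comb N x g (Suc m)) * comb N x g (Suc n)"
      unfolding comb_def cnj_sum complex_cnj_mult cnj_dirichlet_vec by (simp add: mult.assoc)
  qed
  also have "\<dots> = block_form M (comb N x g)"
    unfolding block_form_def by (simp add: sum.atLeast1_atMost_eq)
  finally show ?thesis .
qed

lemma block_form_comb_tendsto_gram:
  assumes "admissible N x"
  shows "(\<lambda>M. block_form M (comb N x g)) \<longlonglongrightarrow> gram N x g"
proof -
  have "(\<lambda>M. \<Sum>i<N. \<Sum>j<N. cnj (g i) * g j * double_partial (dir_terms a (x i) (cnj (x j))) (M, M))
        \<longlonglongrightarrow> gram N x g"
    unfolding gram_def using assms unfolding admissible_def
    by (intro tendsto_sum tendsto_mult_left kappa_diagonal_tendsto) auto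
  thus ?thesis unfolding gram_double_partial_eq_block_form .
qed

lemma weighted_partial_sums_tendsto:
  "wl2 v \<Longrightarrow> (\<lambda>M. \<Sum>n=1..M. weight n * (cmod (v n))\<^sup>2) \<longlonglongrightarrow> wnorm2 v"
proof -
  assume "wl2 v"
  from LIMSEQ_Suc[OF wnorm2_partial_sums_tendsto[OF this]]
  show ?thesis
    using weight_0 by (simp add: lessThan_Suc_atMost atMost_atLeast0 sum.atLeast_Suc_atMost)
qed

lemma gram_bounds:
  assumes adm: "admissible N x"
  shows "Im (gram N x g) = 0"
    and "lower_const * wnorm2 (comb N x g) \<le> Re (gram N x g)"
    and "Re (gram N x g) \<le> upper_const * wnorm2 (comb N x g)"
proof -
  let ?W = "comb N x g"
  have lim: "(\<lambda>M. block_form M ?W) \<longlonglongrightarrow> gram N x g"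
    using adm by (rule block_form_comb_tendsto_gram)
  have wlim: "(\<lambda>M. \<Sum>n=1..M. weight n * (cmod (?W n))\<^sup>2) \<longlonglongrightarrow> wnorm2 ?W"
    using adm by (intro weighted_partial_sums_tendsto wl2_comb)
  have ev: "\<forall>\<^sub>F M in sequentially. M \<ge> k" by (rule eventually_ge_at_top)
  have "\<forall>\<^sub>F M in sequentially. Im (block_form M ?W) = 0"
    using eventually_mono[OF ev Im_block_form] .
  hence "(\<lambda>M. 0) \<longlonglongrightarrow> Im (gram N x g)"
    by (rule Lim_transform_eventually[OF tendsto_Im[OF lim]])
  thus "Im (gram N x g) = 0" by (simp add: LIMSEQ_const_iff)
  show "lower_const * wnorm2 ?W \<le> Re (gram N x g)"
    using eventually_mono[OF ev block_form_lower_bound]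
    by (intro tendsto_le[OF _ tendsto_Re[OF lim] tendsto_mult_left[OF wlim]]) auto
  show "Re (gram N x g) \<le> upper_const * wnorm2 ?W"
    using eventually_mono[OF ev block_form_upper_bound]
    by (intro tendsto_le[OF _ tendsto_mult_left[OF wlim] tendsto_Re[OF lim]]) auto
qed

theorem psd_kernel_kappa: "psd_kernel (kappa a) (half_plane \<rho>)"
  unfolding psd_kernel_def Let_def
proof (intro allI impI conjI)
  fix N :: nat and x g :: "nat \<Rightarrow> complex" assume "\<forall>i<N. x i \<in> half_plane \<rho>"
  hence adm: "admissible N x" unfolding admissible_def .
  show "Im (\<Sum>i<N. \<Sum>j<N. cnj (g i) * g j * kappa a (x i) (x j)) = 0"
    using gram_bounds(1)[OF adm] unfolding gram_def .
  have "0 \<le> lower_const * wnorm2 (comb N x g)"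
    using lower_const_pos wnorm2_nonneg[OF wl2_comb[OF adm]] by simp
  thus "0 \<le> Re (\<Sum>i<N. \<Sum>j<N. cnj (g i) * g j * kappa a (x i) (x j))"
    using gram_bounds(2)[OF adm, of g] unfolding gram_def by linarith
qed

definition residual_majorant :: "nat \<Rightarrow> nat \<Rightarrow> real" where
  "residual_majorant n m = (if m > n then weight m * (real n / real m) powr (2 * (\<rho> + 1)) else 0)"

lemma summable_residual_majorant: "summable (residual_majorant n)"
proof (rule summable_comparison_test'[where N = 0])
  let ?s = "2 * (\<rho> + 1)"
  show "summable (\<lambda>m. real n powr ?s * (real m powr (- ?s) + \<bar>d m\<bar> * real m powr (- ?s)))"
    using rho_gt_1 by (intro summable_mult summable_add summable_abs_d_powr) (auto simp: summable_real_powr_iff)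
  have "weight m \<le> 1 + \<bar>d m\<bar>" for m unfolding weight_def by auto
  moreover have "(real n / real m) powr ?s = real n powr ?s * real m powr (- ?s)" for m
    by (simp add: powr_divide_eq_mult)
  ultimately show "norm (residual_majorant n m) \<le> real n powr ?s * (real m powr (- ?s) + \<bar>d m\<bar> * real m powr (- ?s))"
    for m
    using weight_nonneg[of m] mult_right_mono[of "weight m" "1 + \<bar>d m\<bar>" "(real n / real m) powr ?s"]
    by (auto simp: residual_majorant_def algebra_simps)
qed

lemma weighted_dirichlet_residual_le:
  assumes "n > 0"
  shows "weight m * (cmod (dirichlet_residual n (\<rho> + 1 + real j) m))\<^sup>2 \<le>
         (real n / real (Suc n))\<^sup>2 ^ j * residual_majorant n m"
proof (cases "m > n")
  case True
  define t where "t = real n / real m"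
  have t: "0 < t" "t \<le> real n / real (Suc n)"
    unfolding t_def using True assms by (auto intro!: divide_left_mono)
  have "(cmod (dirichlet_residual n (\<rho> + 1 + real j) m))\<^sup>2 = (t powr (\<rho> + 1 + real j))\<^sup>2"
    using True unfolding dirichlet_residual_def t_def by simp
  also have "\<dots> = t powr (2 * (\<rho> + 1)) * t powr real (2 * j)"
    unfolding power2_eq_square powr_add[symmetric] by (simp add: algebra_simps)
  also have "\<dots> = t powr (2 * (\<rho> + 1)) * (t\<^sup>2) ^ j"
    using t(1) powr_realpow[of t "2 * j"] by (simp add: power_mult)
  also have "\<dots> \<le> t powr (2 * (\<rho> + 1)) * (real n / real (Suc n))\<^sup>2 ^ j"
    using t by (intro mult_left_mono power_mono) auto
  finally have "weight m * (cmod (dirichlet_residual n (\<rho> + 1 + real j) m))\<^sup>2 \<le>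
                weight m * (t powr (2 * (\<rho> + 1)) * (real n / real (Suc n))\<^sup>2 ^ j)"
    using weight_nonneg by (rule mult_left_mono)
  thus ?thesis using True unfolding residual_majorant_def t_def by (simp add: mult_ac)
qed (simp add: dirichlet_residual_def residual_majorant_def)

lemma dirichlet_residual_tendsto_0:
  assumes "n > 0"
  shows "(\<lambda>j. wnorm (dirichlet_residual n (\<rho> + 1 + real j))) \<longlonglongrightarrow> 0"
proof -
  define q where "q = (real n / real (Suc n))\<^sup>2"
  define Z where "Z = suminf (residual_majorant n)"
  have q: "0 \<le> q" "q < 1" unfolding q_def using assms by (auto simp: power_less_one_iff divide_less_eq)
  note bound = weighted_dirichlet_residual_le[OF assms, folded q_def]
  have wl2_res: "wl2 (dirichlet_residual n (\<rho> + 1 + real j))" for j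
    unfolding wl2_def
    by (rule summable_comparison_test'[where N = 0, OF summable_mult[OF summable_residual_majorant]])
      (use bound weight_nonneg in simp)
  have "wnorm2 (dirichlet_residual n (\<rho> + 1 + real j)) \<le> q ^ j * Z" for j
    unfolding wnorm2_def Z_def suminf_mult[OF summable_residual_majorant, symmetric]
    using wl2_res[of j] bound summable_residual_majorant unfolding wl2_def
    by (intro suminf_le summable_mult) auto
  hence upper: "\<forall>\<^sub>F j in sequentially. wnorm (dirichlet_residual n (\<rho> + 1 + real j)) \<le> sqrt (q ^ j * Z)"
    unfolding wnorm_def by simp
  have lower: "\<forall>\<^sub>F j in sequentially. 0 \<le> wnorm (dirichlet_residual n (\<rho> + 1 + real j))"
    using wnorm_nonneg[OF wl2_res] by simp
  have "(\<lambda>j. sqrt (q ^ j * Z)) \<longlonglongrightarrow> sqrt (0 * Z)"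
    using q by (intro tendsto_real_sqrt tendsto_mult_right LIMSEQ_power_zero) auto
  thus ?thesis using tendsto_sandwich[OF lower upper tendsto_const] by simp
qed

lemma approximable_unit_vec_dirichlet: "n > 0 \<Longrightarrow> approximable (unit_vec n)"
proof (induction n rule: less_induct)
  case (less n)
  define V where "V \<sigma> m = of_real (real n powr \<sigma>) *
      (dirichlet_vec (of_real \<sigma>) m - (\<Sum>i\<in>{1..<n}. of_real (real i powr (- \<sigma>)) * unit_vec i m))"
    for \<sigma> :: real and m
  have V_approximable: "approximable (V \<sigma>)" if "\<sigma> > \<rho>" for \<sigma>
  proof -
    have "dirichlet_vec (of_real \<sigma>) = comb 1 (\<lambda>_. of_real \<sigma>) (\<lambda>_. 1)"
      unfolding comb_def by simp
    moreover have "admissible 1 (\<lambda>_. of_real \<sigma>)"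
      using that unfolding admissible_def by (simp add: half_plane_def)
    ultimately have "approximable (dirichlet_vec (of_real \<sigma>))" by (metis approximable_comb)
    thus ?thesis unfolding V_def
      using less.IH by (intro approximable_scale approximable_diff approximable_sum) auto
  qed
  have V_residual: "V \<sigma> m - unit_vec n m = dirichlet_residual n \<sigma> m" for \<sigma> m
    using dirichlet_vec_peel[OF less.prems, of \<sigma> m] unfolding V_def by simp
  have "\<exists>w. approximable w \<and> wnorm (\<lambda>m. w m - unit_vec n m) < \<epsilon>" if "\<epsilon> > 0" for \<epsilon>
  proof -
    obtain j where "wnorm (dirichlet_residual n (\<rho> + 1 + real j)) < \<epsilon>"
      using order_tendstoD(2)[OF dirichlet_residual_tendsto_0[OF less.prems] \<open>\<epsilon> > 0\<close>]
      by (auto simp: eventually_sequentially)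
    thus ?thesis using V_approximable[of "\<rho> + 1 + real j"] V_residual by auto
  qed
  moreover have "wl2 (unit_vec n)" by (rule wl2_finite_support[of n]) (simp add: unit_vec_def)
  ultimately show ?case by (intro approximable_if_approximated)
qed

sublocale total_feature_space weight "half_plane \<rho>" dirichlet_vec
  by unfold_locales (rule approximable_unit_vec_dirichlet)

lemma rkhs_bound_iff:
  "rkhs_bound (kappa a) (half_plane \<rho>) f C \<longleftrightarrow>
     C \<ge> 0 \<and> (\<forall>N x g. admissible N x \<longrightarrow> (cmod (pairing f N x g))\<^sup>2 \<le> C * Re (gram N x g))"
  unfolding rkhs_bound_def admissible_def pairing_def gram_def by blast

lemma rkhs_bound_if_bounded_pairing:
  assumes "bounded_pairing f K"
  shows "rkhs_bound (kappa a) (half_plane \<rho>) f (K\<^sup>2 / lower_const)"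
  unfolding rkhs_bound_iff
proof (intro conjI allI impI)
  show "K\<^sup>2 / lower_const \<ge> 0" using lower_const_pos by simp
  fix N x g assume adm: "admissible N x"
  have "cmod (pairing f N x g) \<le> K * wnorm (comb N x g)"
    using assms adm unfolding bounded_pairing_def by blast
  hence "(cmod (pairing f N x g))\<^sup>2 \<le> (K * wnorm (comb N x g))\<^sup>2"
    by (intro power_mono) auto
  also have "\<dots> = K\<^sup>2 * wnorm2 (comb N x g)"
    using wnorm2_nonneg[OF wl2_comb[OF adm]] by (simp add: wnorm_def power_mult_distrib)
  also have "\<dots> \<le> K\<^sup>2 * (Re (gram N x g) / lower_const)"
    using gram_bounds(2)[OF adm, of g] lower_const_pos by (intro mult_left_mono) (simp_all add: field_simps)
  finally show "(cmod (pairing f N x g))\<^sup>2 \<le> K\<^sup>2 / lower_const * Re (gram N x g)"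
    by simp
qed

lemma bounded_pairing_if_rkhs_bound:
  assumes "rkhs_bound (kappa a) (half_plane \<rho>) f C"
  shows "bounded_pairing f (sqrt (C * upper_const))"
  unfolding bounded_pairing_def
proof (intro allI impI)
  fix N x g assume adm: "admissible N x"
  have C: "C \<ge> 0" using assms unfolding rkhs_bound_def by simp
  have "(cmod (pairing f N x g))\<^sup>2 \<le> C * Re (gram N x g)"
    using assms adm unfolding rkhs_bound_iff by blast
  also have "\<dots> \<le> C * (upper_const * wnorm2 (comb N x g))"
    using gram_bounds(3)[OF adm] C by (rule mult_left_mono)
  finally have "cmod (pairing f N x g) \<le> sqrt (C * upper_const * wnorm2 (comb N x g))"
    by (intro real_le_rsqrt) (simp add: mult_ac)
  thus "cmod (pairing f N x g) \<le> sqrt (C * upper_const) * wnorm (comb N x g)"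
    by (simp add: wnorm_def real_sqrt_mult)
qed

lemma rkhs_norm_le_if_bounded_pairing:
  assumes "bounded_pairing f K"
  shows "rkhs_norm (kappa a) (half_plane \<rho>) f \<le> sqrt (K\<^sup>2 / lower_const)"
proof -
  have "Inf {C. rkhs_bound (kappa a) (half_plane \<rho>) f C} \<le> K\<^sup>2 / lower_const"
    using rkhs_bound_if_bounded_pairing[OF assms]
    by (intro cInf_lower) (auto simp: bdd_below_def rkhs_bound_def)
  thus ?thesis unfolding rkhs_norm_def by simp
qed

lemma dirichlet_poly_eq_feature_poly: "dirichlet_poly M coef = feature_poly M coef"
  unfolding dirichlet_poly_def feature_poly_def cnj_dirichlet_vec ..

theorem dirichlet_poly_in_rkhs:
  assumes "is_dirichlet_poly p"
  shows "in_rkhs (kappa a) (half_plane \<rho>) p"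
proof -
  obtain M coef where "p = feature_poly M coef"
    using assms unfolding is_dirichlet_poly_def dirichlet_poly_eq_feature_poly by blast
  thus ?thesis unfolding in_rkhs_def
    using rkhs_bound_if_bounded_pairing[OF feature_poly_bounded_pairing] by blast
qed

theorem dirichlet_poly_dense:
  assumes "in_rkhs (kappa a) (half_plane \<rho>) f" and "\<epsilon> > 0"
  shows "\<exists>p. is_dirichlet_poly p \<and> rkhs_norm (kappa a) (half_plane \<rho>) (\<lambda>s. f s - p s) < \<epsilon>"
proof -
  obtain C where C: "rkhs_bound (kappa a) (half_plane \<rho>) f C"
    using assms(1) unfolding in_rkhs_def by blast
  define K where "K = sqrt (C * upper_const)"
  have f: "bounded_pairing f K" unfolding K_def using C by (rule bounded_pairing_if_rkhs_bound)
  have K: "K \<ge> 0" using C upper_const_pos unfolding K_def rkhs_bound_def by simp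
  define \<delta> where "\<delta> = \<epsilon> * sqrt lower_const / 2"
  have \<delta>: "\<delta> > 0" unfolding \<delta>_def using assms(2) lower_const_pos by simp
  obtain M where M: "bounded_pairing (\<lambda>s. f s - feature_poly M (pairing_coeff f K) s) \<delta>"
    using bounded_pairing_feature_poly_approx[OF f K \<delta>] by blast
  have "rkhs_norm (kappa a) (half_plane \<rho>) (\<lambda>s. f s - dirichlet_poly M (pairing_coeff f K) s) \<le>
        sqrt (\<delta>\<^sup>2 / lower_const)"
    using rkhs_norm_le_if_bounded_pairing[OF M] unfolding dirichlet_poly_eq_feature_poly .
  also have "\<dots> = \<epsilon> / 2"
    unfolding \<delta>_def using assms(2) lower_const_pos
    by (simp add: real_sqrt_divide power_mult_distrib real_sqrt_mult)
  also have "\<dots> < \<epsilon>" using assms(2) by simp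
  finally show ?thesis unfolding is_dirichlet_poly_def by blast
qed

lemma analytic_symbol_is_dirichlet_poly:
  assumes "n \<ge> k + 1"
  shows "is_dirichlet_poly (analytic_symbol a n)"
proof -
  have "analytic_symbol a n s = dirichlet_poly n (\<lambda>j. a j n) s" for s
  proof -
    have "analytic_symbol a n s = (\<Sum>m<n. a (Suc m) n * of_nat (Suc m) powr (- s))"
      unfolding analytic_symbol_def
      by (rule suminf_finite) (use assms in \<open>auto simp: block_mat_def\<close>)
    thus ?thesis unfolding dirichlet_poly_def by (simp add: sum.atLeast1_atMost_eq)
  qed
  thus ?thesis unfolding is_dirichlet_poly_def by blast
qed

end

theorem theorem3p5:
  fixes k :: nat and b :: "nat \<Rightarrow> nat \<Rightarrow> complex" and c :: "nat \<Rightarrow> complex"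
    and d :: "nat \<Rightarrow> real" and \<rho> :: real
  assumes "k \<ge> 1"
    and "in_S k b c d"
    and "s_val k b c d > 0"
    and "\<rho> > 1"
    and "d \<in> O(\<lambda>l. real l powr (\<rho> - 1))"
  shows "dirichlet_series_kernel (block_mat k b c d) \<rho>
       \<and> psd_kernel (kappa (block_mat k b c d)) (half_plane \<rho>)
       \<and> (\<forall>n\<ge>k + 1. is_dirichlet_poly (analytic_symbol (block_mat k b c d) n))
       \<and> (\<forall>p. is_dirichlet_poly p \<longrightarrow>
              in_rkhs (kappa (block_mat k b c d)) (half_plane \<rho>) p)
       \<and> (\<forall>f. in_rkhs (kappa (block_mat k b c d)) (half_plane \<rho>) f \<longrightarrow>
              (\<forall>\<epsilon>>0. \<exists>p. is_dirichlet_poly p \<and>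
                 rkhs_norm (kappa (block_mat k b c d)) (half_plane \<rho>) (\<lambda>s. f s - p s) < \<epsilon>))"
proof -
  interpret block_kernel k b c d \<rho>
    using assms by unfold_locales
  show ?thesis
    using dirichlet_series_kernel_block psd_kernel_kappa analytic_symbol_is_dirichlet_poly
      dirichlet_poly_in_rkhs dirichlet_poly_dense by blast
qed

end
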